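(* Let $(\Gamma,f,\mu)$ be a measured Reeb graph, $\mathfrak{c}$ a balanced circulation function on $\Gamma$, and $\tilde V$ the set of exceptional points. Assume that for each exceptional point $x_i\in\tilde V$ there are a neighborhood $U_i$ of $x_i$ and a $1$-form $\beta_i$ on $U_i$ such that for each $x\in U_i\setminus\{x_i\}$, $\operatorname{sign}(\beta_i/df)(x)=-\operatorname{sign}\mathfrak{c}(x)$. Then there exists a $1$-form $\beta$ on $\Gamma$ which does not vanish on $\Gamma\setminus\tilde V$, coincides with $\beta_i$ in a neighborhood of each $x_i\in\tilde V$, and is such that the form $f\beta$ is exact.
   Context: Reeb graph: a finite connected oriented graph $\Gamma$ with continuous $f\colon\Gamma\to\mathbb{R}$ strictly increasing along edges; vertices are $1$-valent (of boundary or non-boundary type) or $3$-valent with two incoming and one outgoing edge or vice versa; at a $3$-valent vertex the trunk $e_0$ is the edge alone in its direction, the other two $e_1,e_2$ are branches. A log-smooth measure $\mu$: smooth non-vanishing density $d\mu/df$ at interior points and $1$-valent vertices; near each $3$-valent $v$, with $\tilde f=f-f(v)$, $\mu([v,x])=\varepsilon_i\psi(\tilde f(x))\ln|\tilde f(x)|+\eta_i(\tilde f(x))$ for $x\in e_i$ near $v$, where $\varepsilon_0=2,\varepsilon_1=\varepsilon_2=-1$ and $\psi,\eta_i$ are smooth near $0$ with $\psi(0)=0,\psi'(0)\neq0$, $\eta_0+\eta_1+\eta_2=0$. A measured Reeb graph is a Reeb graph with a log-smooth measure. With $V(\Gamma)$ the vertex set, a circulation function is a continuous $\mathfrak{c}\colon\Gamma\setminus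 V(\Gamma)\to\mathbb{R}$ with finite limits at vertices along each edge, such that $\mathfrak{c}(y)-\mathfrak{c}(x)=\int_{[x,y]}f\,d\mu$ for interior points $x,y$ of an edge pointing from $x$ to $y$, and at every non-boundary vertex the sum of limits along incoming edges equals the sum of limits along outgoing edges. It is balanced if at each $3$-valent vertex $v$ its limits $c_0(v),c_1(v),c_2(v)$ along the three adjacent edges are non-zero and of the same sign. The set of exceptional points is $\tilde V=V(\Gamma)\cup\{x\in\Gamma: f(x)=0\}\cup\{x\in\Gamma:\mathfrak{c}(x)=0\}$. A $1$-form on $\Gamma$ is an expression which locally can be written $g(f)\,df$ with $g$ a smooth function of $f$; $\beta/df$ denotes the corresponding function $g$. A $1$-form $\beta$ is exact if $\int_\ell\beta=0$ for every cycle $\ell$ in $\Gamma$. *)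

theory Defs
  imports "HOL-Analysis.Analysis"
begin

text \<open>
  Since f is continuous and strictly increasing along each edge, every edge e is
  parametrised by the value of f itself: its points are identified with the
  interval [fv (src e), fv (tgt e)], the endpoints being the vertices.
  A point of the graph is either a vertex or an interior point (e, t) of an edge.
\<close>

datatype ('v, 'e) gpt = Vert 'v | EPt 'e real

definition smooth_near :: "(real \<Rightarrow> real) \<Rightarrow> real \<Rightarrow> bool" where
  "smooth_near g x \<longleftrightarrow>
     (\<exists>\<epsilon>>0. \<forall>n. \<forall>s\<in>ball x \<epsilon>. ((deriv ^^ n) g) differentiable (at s))"

definition indeg :: "'e set \<Rightarrow> ('e \<Rightarrow> 'v) \<Rightarrow> 'v \<Rightarrow> nat" where
  "indeg E tgt v = card {e\<in>E. tgt e = v}"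

definition outdeg :: "'e set \<Rightarrow> ('e \<Rightarrow> 'v) \<Rightarrow> 'v \<Rightarrow> nat" where
  "outdeg E src v = card {e\<in>E. src e = v}"

definition valence :: "'e set \<Rightarrow> ('e \<Rightarrow> 'v) \<Rightarrow> ('e \<Rightarrow> 'v) \<Rightarrow> 'v \<Rightarrow> nat" where
  "valence E src tgt v = indeg E tgt v + outdeg E src v"

definition incident :: "('e \<Rightarrow> 'v) \<Rightarrow> ('e \<Rightarrow> 'v) \<Rightarrow> 'v \<Rightarrow> 'e \<Rightarrow> bool" where
  "incident src tgt v e \<longleftrightarrow> src e = v \<or> tgt e = v"

definition reeb_graph :: "'v set \<Rightarrow> 'e set \<Rightarrow> ('e \<Rightarrow> 'v) \<Rightarrow> ('e \<Rightarrow> 'v) \<Rightarrow> ('v \<Rightarrow> real)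
    \<Rightarrow> 'v set \<Rightarrow> bool" where
  "reeb_graph V E src tgt fv B \<longleftrightarrow>
     finite V \<and> finite E \<and> V \<noteq> {} \<and>
     (\<forall>e\<in>E. src e \<in> V \<and> tgt e \<in> V \<and> fv (src e) < fv (tgt e)) \<and>
     (\<forall>v\<in>V. (indeg E tgt v, outdeg E src v) \<in> {(1,0), (0,1), (2,1), (1,2)}) \<and>
     B \<subseteq> {v\<in>V. valence E src tgt v = 1} \<and>
     (\<forall>u\<in>V. \<forall>w\<in>V.
        (\<lambda>a b. \<exists>e\<in>E. (src e = a \<and> tgt e = b) \<or> (src e = b \<and> tgt e = a))\<^sup>*\<^sup>* u w)"

definition is_trunk :: "'e set \<Rightarrow> ('e \<Rightarrow> 'v) \<Rightarrow> ('e \<Rightarrow> 'v) \<Rightarrow> 'v \<Rightarrow> 'e \<Rightarrow> bool" where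
  "is_trunk E src tgt v e \<longleftrightarrow>
     (tgt e = v \<and> indeg E tgt v = 1) \<or> (src e = v \<and> outdeg E src v = 1)"

definition eps_coef :: "'e set \<Rightarrow> ('e \<Rightarrow> 'v) \<Rightarrow> ('e \<Rightarrow> 'v) \<Rightarrow> 'v \<Rightarrow> 'e \<Rightarrow> real" where
  "eps_coef E src tgt v e = (if is_trunk E src tgt v e then 2 else -1)"

text \<open>The segment [v, x] for x = (e,t) on an edge e adjacent to v, in f-coordinates.\<close>
definition vseg :: "('e \<Rightarrow> 'v) \<Rightarrow> ('v \<Rightarrow> real) \<Rightarrow> 'v \<Rightarrow> 'e \<Rightarrow> real \<Rightarrow> real set" where
  "vseg tgt fv v e t = (if tgt e = v then {t..fv v} else {fv v..t})"

text \<open>Log-smooth measure, given by its density dens e = d\<mu>/df on the interior of each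
  edge e (so \<mu>([x,y]) = integral of dens e over [f x, f y]).\<close>
definition log_smooth :: "'v set \<Rightarrow> 'e set \<Rightarrow> ('e \<Rightarrow> 'v) \<Rightarrow> ('e \<Rightarrow> 'v) \<Rightarrow> ('v \<Rightarrow> real)
    \<Rightarrow> ('e \<Rightarrow> real \<Rightarrow> real) \<Rightarrow> bool" where
  "log_smooth V E src tgt fv dens \<longleftrightarrow>
     (\<forall>e\<in>E. \<forall>t. fv (src e) < t \<and> t < fv (tgt e) \<longrightarrow>
        smooth_near (dens e) t \<and> dens e t > 0) \<and>
     (\<forall>v\<in>V. valence E src tgt v = 1 \<longrightarrow>
        (\<forall>e\<in>E. incident src tgt v e \<longrightarrow>
           (\<exists>h \<delta>. \<delta> > 0 \<and> smooth_near h (fv v) \<and> h (fv v) \<noteq> 0 \<and>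
              (\<forall>t. fv (src e) < t \<and> t < fv (tgt e) \<and> \<bar>t - fv v\<bar> < \<delta> \<longrightarrow> dens e t = h t)))) \<and>
     (\<forall>v\<in>V. valence E src tgt v = 3 \<longrightarrow>
        (\<exists>\<psi> \<eta> \<delta>. \<delta> > 0 \<and> smooth_near \<psi> 0 \<and> \<psi> 0 = 0 \<and> deriv \<psi> 0 \<noteq> 0 \<and>
           (\<forall>e\<in>E. incident src tgt v e \<longrightarrow> smooth_near (\<eta> e) 0) \<and>
           (\<forall>s. \<bar>s\<bar> < \<delta> \<longrightarrow> (\<Sum>e\<in>{e\<in>E. incident src tgt v e}. \<eta> e s) = 0) \<and>
           (\<forall>e\<in>E. incident src tgt v e \<longrightarrow>
              (\<forall>t. fv (src e) < t \<and> t < fv (tgt e) \<and> \<bar>t - fv v\<bar> < \<delta> \<longrightarrow>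
                 (dens e has_integral
                    (eps_coef E src tgt v e * \<psi> (t - fv v) * ln \<bar>t - fv v\<bar> + \<eta> e (t - fv v)))
                 (vseg tgt fv v e t)))))"

definition lim_src :: "('e \<Rightarrow> 'v) \<Rightarrow> ('v \<Rightarrow> real) \<Rightarrow> ('e \<Rightarrow> real \<Rightarrow> real) \<Rightarrow> 'e \<Rightarrow> real" where
  "lim_src src fv c e = Lim (at_right (fv (src e))) (c e)"

definition lim_tgt :: "('e \<Rightarrow> 'v) \<Rightarrow> ('v \<Rightarrow> real) \<Rightarrow> ('e \<Rightarrow> real \<Rightarrow> real) \<Rightarrow> 'e \<Rightarrow> real" where
  "lim_tgt tgt fv c e = Lim (at_left (fv (tgt e))) (c e)"

definition lim_at :: "('e \<Rightarrow> 'v) \<Rightarrow> ('e \<Rightarrow> 'v) \<Rightarrow> ('v \<Rightarrow> real) \<Rightarrow> ('e \<Rightarrow> real \<Rightarrow> real)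
    \<Rightarrow> 'v \<Rightarrow> 'e \<Rightarrow> real" where
  "lim_at src tgt fv c v e = (if tgt e = v then lim_tgt tgt fv c e else lim_src src fv c e)"

definition circulation :: "'v set \<Rightarrow> 'e set \<Rightarrow> ('e \<Rightarrow> 'v) \<Rightarrow> ('e \<Rightarrow> 'v) \<Rightarrow> ('v \<Rightarrow> real)
    \<Rightarrow> 'v set \<Rightarrow> ('e \<Rightarrow> real \<Rightarrow> real) \<Rightarrow> ('e \<Rightarrow> real \<Rightarrow> real) \<Rightarrow> bool" where
  "circulation V E src tgt fv B dens c \<longleftrightarrow>
     (\<forall>e\<in>E. continuous_on {fv (src e)<..<fv (tgt e)} (c e)) \<and>
     (\<forall>e\<in>E. \<forall>x y. fv (src e) < x \<and> x \<le> y \<and> y < fv (tgt e) \<longrightarrow>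
        c e y - c e x = integral {x..y} (\<lambda>t. t * dens e t)) \<and>
     (\<forall>e\<in>E. (\<exists>L. (c e \<longlongrightarrow> L) (at_right (fv (src e)))) \<and>
             (\<exists>L. (c e \<longlongrightarrow> L) (at_left (fv (tgt e))))) \<and>
     (\<forall>v\<in>V - B. (\<Sum>e\<in>{e\<in>E. tgt e = v}. lim_tgt tgt fv c e) =
                 (\<Sum>e\<in>{e\<in>E. src e = v}. lim_src src fv c e))"

definition balanced :: "'v set \<Rightarrow> 'e set \<Rightarrow> ('e \<Rightarrow> 'v) \<Rightarrow> ('e \<Rightarrow> 'v) \<Rightarrow> ('v \<Rightarrow> real)
    \<Rightarrow> ('e \<Rightarrow> real \<Rightarrow> real) \<Rightarrow> bool" where
  "balanced V E src tgt fv c \<longleftrightarrow>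
     (\<forall>v\<in>V. valence E src tgt v = 3 \<longrightarrow>
        (\<forall>e\<in>E. incident src tgt v e \<longrightarrow> lim_at src tgt fv c v e > 0) \<or>
        (\<forall>e\<in>E. incident src tgt v e \<longrightarrow> lim_at src tgt fv c v e < 0))"

definition exceptional :: "'v set \<Rightarrow> 'e set \<Rightarrow> ('e \<Rightarrow> 'v) \<Rightarrow> ('e \<Rightarrow> 'v) \<Rightarrow> ('v \<Rightarrow> real)
    \<Rightarrow> ('e \<Rightarrow> real \<Rightarrow> real) \<Rightarrow> ('v, 'e) gpt set" where
  "exceptional V E src tgt fv c =
     Vert ` V \<union> {EPt e t | e t. e \<in> E \<and> fv (src e) < t \<and> t < fv (tgt e) \<and> (t = 0 \<or> c e t = 0)}"

definition fval :: "('v \<Rightarrow> real) \<Rightarrow> ('v, 'e) gpt \<Rightarrow> real" where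
  "fval fv p = (case p of Vert v \<Rightarrow> fv v | EPt e t \<Rightarrow> t)"

text \<open>A local 1-form g(f) df on the star neighbourhood of radius r (in f) of the point p,
  with sign (g/df) = - sign c on the punctured neighbourhood.\<close>
definition local_form_ok :: "'e set \<Rightarrow> ('e \<Rightarrow> 'v) \<Rightarrow> ('e \<Rightarrow> 'v) \<Rightarrow> ('v \<Rightarrow> real)
    \<Rightarrow> ('e \<Rightarrow> real \<Rightarrow> real) \<Rightarrow> ('v, 'e) gpt \<Rightarrow> real \<Rightarrow> (real \<Rightarrow> real) \<Rightarrow> bool" where
  "local_form_ok E src tgt fv c p r g \<longleftrightarrow>
     r > 0 \<and> (\<forall>s. \<bar>s - fval fv p\<bar> < r \<longrightarrow> smooth_near g s) \<and>
     (case p of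
        Vert v \<Rightarrow> (\<forall>e\<in>E. incident src tgt v e \<longrightarrow>
           (\<forall>t. fv (src e) < t \<and> t < fv (tgt e) \<and> \<bar>t - fv v\<bar> < r \<longrightarrow>
              sgn (g t) = - sgn (c e t)))
      | EPt e0 t0 \<Rightarrow>
           (\<forall>t. fv (src e0) < t \<and> t < fv (tgt e0) \<and> \<bar>t - t0\<bar> < r \<and> t \<noteq> t0 \<longrightarrow>
              sgn (g t) = - sgn (c e0 t)))"

text \<open>A 1-form on the whole graph: ge e is the coefficient of df on edge e; it is
  locally g(f) df with g smooth, also at the vertices (one g for all adjacent edges).\<close>
definition one_form :: "'v set \<Rightarrow> 'e set \<Rightarrow> ('e \<Rightarrow> 'v) \<Rightarrow> ('e \<Rightarrow> 'v) \<Rightarrow> ('v \<Rightarrow> real)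
    \<Rightarrow> ('e \<Rightarrow> real \<Rightarrow> real) \<Rightarrow> bool" where
  "one_form V E src tgt fv ge \<longleftrightarrow>
     (\<forall>e\<in>E. \<forall>t. fv (src e) < t \<and> t < fv (tgt e) \<longrightarrow> smooth_near (ge e) t) \<and>
     (\<forall>v\<in>V. \<exists>h \<delta>. \<delta> > 0 \<and> smooth_near h (fv v) \<and>
        (\<forall>e\<in>E. incident src tgt v e \<longrightarrow>
           (\<forall>t. fv (src e) \<le> t \<and> t \<le> fv (tgt e) \<and> \<bar>t - fv v\<bar> < \<delta> \<longrightarrow> ge e t = h t)))"

definition coincides_near :: "'e set \<Rightarrow> ('e \<Rightarrow> 'v) \<Rightarrow> ('e \<Rightarrow> 'v) \<Rightarrow> ('v \<Rightarrow> real)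
    \<Rightarrow> ('e \<Rightarrow> real \<Rightarrow> real) \<Rightarrow> ('v, 'e) gpt \<Rightarrow> real \<Rightarrow> (real \<Rightarrow> real) \<Rightarrow> bool" where
  "coincides_near E src tgt fv ge p r g \<longleftrightarrow>
     (\<exists>\<delta>>0. \<delta> \<le> r \<and>
       (case p of
          Vert v \<Rightarrow> (\<forall>e\<in>E. incident src tgt v e \<longrightarrow>
             (\<forall>t. fv (src e) \<le> t \<and> t \<le> fv (tgt e) \<and> \<bar>t - fv v\<bar> < \<delta> \<longrightarrow> ge e t = g t))
        | EPt e0 t0 \<Rightarrow>
             (\<forall>t. fv (src e0) \<le> t \<and> t \<le> fv (tgt e0) \<and> \<bar>t - t0\<bar> < \<delta> \<longrightarrow> ge e0 t = g t)))"

text \<open>Cycles: closed walks in the underlying undirected graph; (e, True) traverses e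
  along its orientation, (e, False) against it.\<close>
definition wstart :: "('e \<Rightarrow> 'v) \<Rightarrow> ('e \<Rightarrow> 'v) \<Rightarrow> 'e \<times> bool \<Rightarrow> 'v" where
  "wstart src tgt s = (if snd s then src (fst s) else tgt (fst s))"

definition wend :: "('e \<Rightarrow> 'v) \<Rightarrow> ('e \<Rightarrow> 'v) \<Rightarrow> 'e \<times> bool \<Rightarrow> 'v" where
  "wend src tgt s = (if snd s then tgt (fst s) else src (fst s))"

definition closed_walk :: "'e set \<Rightarrow> ('e \<Rightarrow> 'v) \<Rightarrow> ('e \<Rightarrow> 'v) \<Rightarrow> ('e \<times> bool) list \<Rightarrow> bool" where
  "closed_walk E src tgt w \<longleftrightarrow>
     w \<noteq> [] \<and> fst ` set w \<subseteq> E \<and>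
     (\<forall>i. Suc i < length w \<longrightarrow> wend src tgt (w ! i) = wstart src tgt (w ! Suc i)) \<and>
     wend src tgt (last w) = wstart src tgt (hd w)"

definition cycle_integral :: "('e \<Rightarrow> 'v) \<Rightarrow> ('e \<Rightarrow> 'v) \<Rightarrow> ('v \<Rightarrow> real)
    \<Rightarrow> ('e \<Rightarrow> real \<Rightarrow> real) \<Rightarrow> ('e \<times> bool) list \<Rightarrow> real" where
  "cycle_integral src tgt fv h w =
     (\<Sum>s\<leftarrow>w. (if snd s then 1 else -1) *
          integral {fv (src (fst s))..fv (tgt (fst s))} (h (fst s)))"

definition exact_form :: "'e set \<Rightarrow> ('e \<Rightarrow> 'v) \<Rightarrow> ('e \<Rightarrow> 'v) \<Rightarrow> ('v \<Rightarrow> real)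
    \<Rightarrow> ('e \<Rightarrow> real \<Rightarrow> real) \<Rightarrow> bool" where
  "exact_form E src tgt fv h \<longleftrightarrow>
     (\<forall>w. closed_walk E src tgt w \<longrightarrow> cycle_integral src tgt fv h w = 0)"

end

theory Submission
  imports Defs "HOL-Computational_Algebra.Polynomial"
begin

text \<open>
  On every edge the form \<open>\<beta>\<close> is glued, by smooth plateau functions, from the prescribed
  local forms near the exceptional points and from \<open>-c df\<close> elsewhere. Both pieces have the
  sign of \<open>-c\<close>, so \<open>\<beta>\<close> has no zeros off the exceptional set.

  The form \<open>f\<beta>\<close> is exact as soon as \<open>\<integral>\<^sub>e f\<beta> = \<lambda> (F(tgt e) - F(src e))\<close> for a
  function \<open>F\<close> on the vertices. We take \<open>F(v) = -\<sigma>(v) |f(v)|\<close>, where \<open>\<sigma>(v)\<close> is the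
  sign of \<open>c\<close> at \<open>v\<close>; it is well defined because \<open>c\<close> is balanced. Adding nonnegative
  multiples of bumps times \<open>-c df\<close> where \<open>f c > 0\<close> (resp. \<open>f c < 0\<close>) lowers (raises)
  \<open>\<integral>\<^sub>e f\<beta>\<close> arbitrarily. Since \<open>c\<close> is strictly monotone on either side of \<open>f = 0\<close>,
  an edge on which \<open>f c\<close> takes only one sign meets no exceptional point, so \<open>c\<close> and
  \<open>f\<close> keep their signs along it and \<open>|f|\<close> is monotone; there the one available direction
  is the right one once \<open>\<lambda>\<close> is large enough.
\<close>

section \<open>Smooth functions of one real variable\<close>

definition higher_differentiable_on :: "nat \<Rightarrow> real set \<Rightarrow> (real \<Rightarrow> real) \<Rightarrow> bool" where
  "higher_differentiable_on n S f \<longleftrightarrow> (\<forall>k<n. \<forall>s\<in>S. (deriv ^^ k) f differentiable (at s))"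

lemma higher_differentiable_on_0 [simp]: "higher_differentiable_on 0 S f"
  by (simp add: higher_differentiable_on_def)

lemma higher_differentiable_on_Suc:
  "higher_differentiable_on (Suc n) S f \<longleftrightarrow>
     (\<forall>s\<in>S. f differentiable (at s)) \<and> higher_differentiable_on n S (deriv f)"
proof -
  have "\<And>k. (deriv ^^ Suc k) f = (deriv ^^ k) (deriv f)"
    by (simp add: funpow_Suc_right del: funpow.simps)
  then show ?thesis unfolding higher_differentiable_on_def
    by (auto simp: less_Suc_eq_0_disj simp del: funpow.simps)
qed

lemma higher_differentiable_on_SucD:
  "higher_differentiable_on (Suc n) S f \<Longrightarrow> higher_differentiable_on n S f"
  by (auto simp: higher_differentiable_on_def)

lemma higher_differentiable_on_subset:
  "higher_differentiable_on n S f \<Longrightarrow> T \<subseteq> S \<Longrightarrow> higher_differentiable_on n T f"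
  by (auto simp: higher_differentiable_on_def)

lemma higher_differentiable_on_cong:
  assumes "open S" and eq: "\<And>x. x \<in> S \<Longrightarrow> f x = g x" and "higher_differentiable_on n S f"
  shows "higher_differentiable_on n S g"
  unfolding higher_differentiable_on_def
proof (intro allI impI ballI)
  fix k s assume k: "k < n" and s: "s \<in> S"
  have ev: "\<forall>\<^sub>F y in nhds s. (deriv ^^ k) f y = (deriv ^^ k) g y"
  proof -
    have "\<forall>\<^sub>F y in nhds s. y \<in> S" using \<open>open S\<close> s by (simp add: eventually_nhds_in_open)
    then show ?thesis
    proof (rule eventually_mono)
      fix y assume "y \<in> S"
      have "\<forall>\<^sub>F z in nhds y. f z = g z" using \<open>open S\<close> \<open>y \<in> S\<close> eq
        by (metis (mono_tags, lifting) eventually_mono eventually_nhds_in_open)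
      then show "(deriv ^^ k) f y = (deriv ^^ k) g y" by (rule higher_deriv_cong_ev) simp
    qed
  qed
  have "(deriv ^^ k) f differentiable at s"
    using assms(3) k s by (auto simp: higher_differentiable_on_def)
  then obtain D where D: "((deriv ^^ k) f has_derivative D) (at s)" by (auto simp: differentiable_def)
  have "((deriv ^^ k) g has_derivative D) (at s)"
  proof (rule has_derivative_transform_eventually[OF D])
    show "\<forall>\<^sub>F x' in at s. (deriv ^^ k) f x' = (deriv ^^ k) g x'"
      using ev by (simp add: eventually_at_filter eventually_mono)
  qed (use eventually_nhds_x_imp_x[OF ev] in auto)
  then show "(deriv ^^ k) g differentiable at s" by (auto simp: differentiable_def)
qed

lemma differentiable_imp_has_real_derivative_deriv:
  "f differentiable (at s) \<Longrightarrow> (f has_real_derivative deriv f s) (at s)"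
  using DERIV_deriv_iff_real_differentiable by blast

lemma higher_differentiable_on_const: "higher_differentiable_on n S (\<lambda>x. k)"
proof (induction n arbitrary: k)
  case (Suc n)
  have "deriv (\<lambda>x. k) = (\<lambda>x. 0::real)" by (rule ext, rule DERIV_imp_deriv) auto
  then show ?case using Suc by (simp add: higher_differentiable_on_Suc)
qed simp

lemma higher_differentiable_on_ident: "higher_differentiable_on n S (\<lambda>x. x)"
proof (cases n)
  case (Suc m)
  have "deriv (\<lambda>x. x) = (\<lambda>x. 1::real)" by (rule ext, rule DERIV_imp_deriv) auto
  then show ?thesis using Suc by (simp add: higher_differentiable_on_Suc higher_differentiable_on_const)
qed simp

lemma higher_differentiable_on_add:
  "open S \<Longrightarrow> higher_differentiable_on n S f \<Longrightarrow> higher_differentiable_on n S g \<Longrightarrow>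
    higher_differentiable_on n S (\<lambda>x. f x + g x)"
proof (induction n arbitrary: f g)
  case (Suc n)
  have df: "\<forall>s\<in>S. f differentiable at s" and dg: "\<forall>s\<in>S. g differentiable at s"
    and dd: "higher_differentiable_on n S (deriv f)" "higher_differentiable_on n S (deriv g)"
    using Suc.prems by (auto simp: higher_differentiable_on_Suc)
  have eq: "deriv f x + deriv g x = deriv (\<lambda>x. f x + g x) x" if "x \<in> S" for x
    using df dg that
    by (intro DERIV_imp_deriv[symmetric] derivative_intros differentiable_imp_has_real_derivative_deriv) auto
  have "higher_differentiable_on n S (\<lambda>x. deriv f x + deriv g x)" using Suc.IH[OF Suc.prems(1) dd] .
  then have "higher_differentiable_on n S (deriv (\<lambda>x. f x + g x))"
    by (rule higher_differentiable_on_cong[OF Suc.prems(1), rotated]) (rule eq)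
  then show ?case using df dg by (auto simp: higher_differentiable_on_Suc)
qed simp

lemma higher_differentiable_on_mult:
  "open S \<Longrightarrow> higher_differentiable_on n S f \<Longrightarrow> higher_differentiable_on n S g \<Longrightarrow>
    higher_differentiable_on n S (\<lambda>x. f x * g x)"
proof (induction n arbitrary: f g)
  case (Suc n)
  have df: "\<forall>s\<in>S. f differentiable at s" and dg: "\<forall>s\<in>S. g differentiable at s"
    and dd: "higher_differentiable_on n S (deriv f)" "higher_differentiable_on n S (deriv g)"
    using Suc.prems by (auto simp: higher_differentiable_on_Suc)
  have d0: "higher_differentiable_on n S f" "higher_differentiable_on n S g"
    using Suc.prems higher_differentiable_on_SucD by auto
  have eq: "deriv f x * g x + f x * deriv g x = deriv (\<lambda>x. f x * g x) x" if "x \<in> S" for x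
  proof -
    have "((\<lambda>x. f x * g x) has_real_derivative deriv f x * g x + deriv g x * f x) (at x)"
      using df dg that by (intro DERIV_mult differentiable_imp_has_real_derivative_deriv) auto
    then show ?thesis by (simp add: DERIV_imp_deriv mult.commute)
  qed
  have "higher_differentiable_on n S (\<lambda>x. deriv f x * g x)"
    "higher_differentiable_on n S (\<lambda>x. f x * deriv g x)"
    using Suc.IH Suc.prems(1) dd d0 by blast+
  then have "higher_differentiable_on n S (\<lambda>x. deriv f x * g x + f x * deriv g x)"
    using higher_differentiable_on_add Suc.prems(1) by blast
  then have "higher_differentiable_on n S (deriv (\<lambda>x. f x * g x))"
    by (rule higher_differentiable_on_cong[OF Suc.prems(1), rotated]) (rule eq)
  then show ?case using df dg by (auto simp: higher_differentiable_on_Suc)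
qed simp

lemma higher_differentiable_on_inverse:
  "open S \<Longrightarrow> (\<And>x. x \<in> S \<Longrightarrow> h x \<noteq> 0) \<Longrightarrow> higher_differentiable_on n S h \<Longrightarrow>
    higher_differentiable_on n S (\<lambda>x. inverse (h x))"
proof (induction n arbitrary: h)
  case (Suc n)
  have dh: "\<forall>s\<in>S. h differentiable at s" and dd: "higher_differentiable_on n S (deriv h)"
    using Suc.prems by (auto simp: higher_differentiable_on_Suc)
  have d0: "higher_differentiable_on n S h" using Suc.prems higher_differentiable_on_SucD by auto
  have eq: "(- 1 * deriv h x) * (inverse (h x) * inverse (h x)) = deriv (\<lambda>x. inverse (h x)) x"
    if "x \<in> S" for x
    using dh that Suc.prems(2)[OF that]
    by (intro DERIV_imp_deriv[symmetric])
      (auto intro!: derivative_eq_intros differentiable_imp_has_real_derivative_deriv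
        simp: power2_eq_square)
  have "higher_differentiable_on n S (\<lambda>x. inverse (h x))" using Suc.IH Suc.prems d0 by blast
  then have "higher_differentiable_on n S (\<lambda>x. (- 1 * deriv h x) * (inverse (h x) * inverse (h x)))"
    using higher_differentiable_on_mult[OF Suc.prems(1)]
      higher_differentiable_on_mult[OF Suc.prems(1) higher_differentiable_on_const dd] by blast
  then have "higher_differentiable_on n S (deriv (\<lambda>x. inverse (h x)))"
    by (rule higher_differentiable_on_cong[OF Suc.prems(1), rotated]) (rule eq)
  moreover have "\<forall>s\<in>S. (\<lambda>x. inverse (h x)) differentiable at s"
    using dh Suc.prems(2) by (auto intro!: derivative_intros)
  ultimately show ?case by (simp add: higher_differentiable_on_Suc)
qed simp

lemma open_affine_preimage: "open S \<Longrightarrow> open {x::real. a * x + b \<in> S}"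
  using open_vimage[of S "\<lambda>x. a * x + b"]
  by (simp add: vimage_def continuous_on_add continuous_on_mult_left)

lemma higher_differentiable_on_affine:
  "open S \<Longrightarrow> higher_differentiable_on n S f \<Longrightarrow>
    higher_differentiable_on n {x. a * x + b \<in> S} (\<lambda>x. f (a * x + b))"
proof (induction n arbitrary: f)
  case (Suc n)
  define T where "T = {x. a * x + b \<in> S}"
  have "open T" unfolding T_def using open_affine_preimage[OF Suc.prems(1)] .
  have df: "\<forall>s\<in>S. f differentiable at s" and dd: "higher_differentiable_on n S (deriv f)"
    using Suc.prems by (auto simp: higher_differentiable_on_Suc)
  have chain: "((\<lambda>x. f (a * x + b)) has_real_derivative deriv f (a * x + b) * a) (at x)"
    if "x \<in> T" for x
    using df that unfolding T_def
    by (intro DERIV_chain2[where f=f] differentiable_imp_has_real_derivative_deriv)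
      (auto intro!: derivative_eq_intros)
  have eq: "a * deriv f (a * x + b) = deriv (\<lambda>x. f (a * x + b)) x" if "x \<in> T" for x
    using chain[OF that] by (simp add: DERIV_imp_deriv mult.commute)
  have "higher_differentiable_on n T (\<lambda>x. deriv f (a * x + b))"
    unfolding T_def using Suc.IH[OF Suc.prems(1) dd] .
  then have "higher_differentiable_on n T (\<lambda>x. a * deriv f (a * x + b))"
    using higher_differentiable_on_mult[OF \<open>open T\<close> higher_differentiable_on_const] by blast
  then have "higher_differentiable_on n T (deriv (\<lambda>x. f (a * x + b)))"
    by (rule higher_differentiable_on_cong[OF \<open>open T\<close>, rotated]) (rule eq)
  moreover have "\<forall>s\<in>T. (\<lambda>x. f (a * x + b)) differentiable at s"
    using chain real_differentiable_def by blast
  ultimately show ?case by (simp add: higher_differentiable_on_Suc T_def)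
qed simp

lemma smooth_near_iff_higher_differentiable_on:
  "smooth_near f x \<longleftrightarrow> (\<exists>S. open S \<and> x \<in> S \<and> (\<forall>n. higher_differentiable_on n S f))"
proof
  assume "smooth_near f x"
  then obtain e where "e > 0" "\<forall>n. \<forall>s\<in>ball x e. (deriv ^^ n) f differentiable (at s)"
    unfolding smooth_near_def by blast
  then show "\<exists>S. open S \<and> x \<in> S \<and> (\<forall>n. higher_differentiable_on n S f)"
    by (intro exI[of _ "ball x e"]) (auto simp: higher_differentiable_on_def)
next
  assume "\<exists>S. open S \<and> x \<in> S \<and> (\<forall>n. higher_differentiable_on n S f)"
  then obtain S where S: "open S" "x \<in> S" "\<forall>n. higher_differentiable_on n S f" by blast
  then obtain e where "e > 0" "ball x e \<subseteq> S" using open_contains_ball by blast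
  then show "smooth_near f x" unfolding smooth_near_def
    using S(3) by (intro exI[of _ e]) (auto simp: higher_differentiable_on_def)
qed

lemma smooth_nearI:
  "open S \<Longrightarrow> x \<in> S \<Longrightarrow> (\<And>n. higher_differentiable_on n S f) \<Longrightarrow> smooth_near f x"
  using smooth_near_iff_higher_differentiable_on by blast

lemma smooth_nearE:
  assumes "smooth_near f x"
  obtains S where "open S" "x \<in> S" "\<And>n. higher_differentiable_on n S f"
  using assms smooth_near_iff_higher_differentiable_on by blast

lemma higher_differentiable_on_if_smooth_near:
  "(\<And>s. s \<in> S \<Longrightarrow> smooth_near f s) \<Longrightarrow> higher_differentiable_on n S f"
  unfolding higher_differentiable_on_def smooth_near_def by (metis centre_in_ball)

lemma smooth_near_const: "smooth_near (\<lambda>y. k) x"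
  by (rule smooth_nearI[of UNIV]) (auto intro: higher_differentiable_on_const)

lemma smooth_near_ident: "smooth_near (\<lambda>y. y) x"
  by (rule smooth_nearI[of UNIV]) (auto intro: higher_differentiable_on_ident)

lemma smooth_near_add:
  assumes "smooth_near f x" "smooth_near g x"
  shows "smooth_near (\<lambda>y. f y + g y) x"
proof -
  obtain S T where "open S" "x \<in> S" "\<And>n. higher_differentiable_on n S f"
    "open T" "x \<in> T" "\<And>n. higher_differentiable_on n T g"
    using assms by (metis smooth_nearE)
  then show ?thesis
    by (intro smooth_nearI[of "S \<inter> T"])
      (auto intro!: higher_differentiable_on_add intro: higher_differentiable_on_subset)
qed

lemma smooth_near_mult:
  assumes "smooth_near f x" "smooth_near g x"
  shows "smooth_near (\<lambda>y. f y * g y) x"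
proof -
  obtain S T where "open S" "x \<in> S" "\<And>n. higher_differentiable_on n S f"
    "open T" "x \<in> T" "\<And>n. higher_differentiable_on n T g"
    using assms by (metis smooth_nearE)
  then show ?thesis
    by (intro smooth_nearI[of "S \<inter> T"])
      (auto intro!: higher_differentiable_on_mult intro: higher_differentiable_on_subset)
qed

lemma smooth_near_minus: "smooth_near f x \<Longrightarrow> smooth_near (\<lambda>y. - f y) x"
  using smooth_near_mult[OF smooth_near_const, of f x "-1"] by simp

lemma smooth_near_diff:
  "smooth_near f x \<Longrightarrow> smooth_near g x \<Longrightarrow> smooth_near (\<lambda>y. f y - g y) x"
  using smooth_near_add[OF _ smooth_near_minus, of f x g] by simp

lemma smooth_near_sum:
  "finite A \<Longrightarrow> (\<And>p. p \<in> A \<Longrightarrow> smooth_near (F p) x) \<Longrightarrow> smooth_near (\<lambda>y. \<Sum>p\<in>A. F p y) x"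
  by (induction A rule: finite_induct) (auto intro!: smooth_near_add smooth_near_const)

lemma smooth_near_inverse:
  assumes "\<And>y. h y \<noteq> 0" "smooth_near h x"
  shows "smooth_near (\<lambda>y. inverse (h y)) x"
proof -
  obtain S where "open S" "x \<in> S" "\<And>n. higher_differentiable_on n S h"
    using assms(2) by (metis smooth_nearE)
  then show ?thesis using assms(1)
    by (intro smooth_nearI[of S]) (auto intro!: higher_differentiable_on_inverse)
qed

lemma smooth_near_affine:
  assumes "smooth_near f (a * x + b)"
  shows "smooth_near (\<lambda>y. f (a * y + b)) x"
proof -
  obtain S where "open S" "a * x + b \<in> S" "\<And>n. higher_differentiable_on n S f"
    using assms by (metis smooth_nearE)
  then show ?thesis
    by (intro smooth_nearI[of "{y. a * y + b \<in> S}"] open_affine_preimage)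
      (auto intro!: higher_differentiable_on_affine)
qed

lemma smooth_near_shift: "smooth_near f (x - b) \<Longrightarrow> smooth_near (\<lambda>y. f (y - b)) x"
  using smooth_near_affine[of f 1 x "-b"] by simp

lemma smooth_near_reflect: "smooth_near f (b - x) \<Longrightarrow> smooth_near (\<lambda>y. f (b - y)) x"
  using smooth_near_affine[of f "-1" x b] by simp

lemma smooth_near_cong:
  assumes "smooth_near f x" "open T" "x \<in> T" "\<And>y. y \<in> T \<Longrightarrow> f y = g y"
  shows "smooth_near g x"
proof -
  obtain S where "open S" "x \<in> S" "\<And>n. higher_differentiable_on n S f"
    using assms(1) by (metis smooth_nearE)
  then show ?thesis using assms
    by (intro smooth_nearI[of "S \<inter> T"])
      (auto intro: higher_differentiable_on_cong[where f=f] higher_differentiable_on_subset)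
qed

lemma smooth_near_imp_differentiable: "smooth_near f x \<Longrightarrow> f differentiable (at x)"
  unfolding smooth_near_def by (metis centre_in_ball funpow_0)

lemma smooth_near_imp_isCont: "smooth_near f x \<Longrightarrow> isCont f x"
  using smooth_near_imp_differentiable differentiable_imp_continuous_within by blast

section \<open>Smooth cutoff functions\<close>

definition flat_exp :: "real \<Rightarrow> real" where
  "flat_exp x = (if 0 < x then exp (- inverse x) else 0)"

fun flat_exp_poly :: "nat \<Rightarrow> real poly" where
  "flat_exp_poly 0 = 1"
| "flat_exp_poly (Suc n) = monom 1 2 * (flat_exp_poly n - pderiv (flat_exp_poly n))"

definition flat_exp_higher_deriv :: "nat \<Rightarrow> real \<Rightarrow> real" where
  "flat_exp_higher_deriv n x =
     (if 0 < x then poly (flat_exp_poly n) (inverse x) * exp (- inverse x) else 0)"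

lemma poly_times_exp_neg_tendsto_0:
  fixes p :: "real poly"
  shows "((\<lambda>z. poly p z * z * exp (- z)) \<longlongrightarrow> 0) at_top"
proof -
  have eq: "poly p z * z * exp (- z) = (\<Sum>i\<le>degree p. coeff p i * (z ^ Suc i / exp z))" for z :: real
  proof -
    have "poly p z * z * exp (- z) = (\<Sum>i\<le>degree p. coeff p i * z^i) * (z * inverse (exp z))"
      by (simp only: poly_altdef exp_minus mult.assoc)
    also have "\<dots> = (\<Sum>i\<le>degree p. coeff p i * z^i * (z * inverse (exp z)))"
      by (rule sum_distrib_right)
    also have "\<dots> = (\<Sum>i\<le>degree p. coeff p i * (z ^ Suc i / exp z))"
      by (intro sum.cong refl) (simp add: divide_inverse mult_ac)
    finally show ?thesis .
  qed
  have "((\<lambda>z. \<Sum>i\<le>degree p. coeff p i * (z ^ Suc i / exp z)) \<longlongrightarrow> (\<Sum>i\<le>degree p. coeff p i * 0)) at_top"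
    by (intro tendsto_sum tendsto_mult tendsto_const tendsto_power_div_exp_0)
  then show ?thesis by (simp add: eq)
qed

lemma flat_exp_higher_deriv_has_derivative_pos:
  assumes "0 < x"
  shows "(flat_exp_higher_deriv n has_real_derivative flat_exp_higher_deriv (Suc n) x) (at x)"
proof -
  let ?P = "flat_exp_poly n"
  have h1: "((\<lambda>x. poly ?P (inverse x)) has_real_derivative
      poly (pderiv ?P) (inverse x) * (- (inverse x ^ 2))) (at x)"
    using DERIV_chain2[OF poly_DERIV DERIV_inverse[of x UNIV]] assms by (simp add: eval_nat_numeral)
  have h2: "((\<lambda>x. exp (- inverse x)) has_real_derivative exp (- inverse x) * (inverse x ^ 2)) (at x)"
    using DERIV_chain2[OF DERIV_exp DERIV_minus[OF DERIV_inverse[of x UNIV]]] assms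
    by (simp add: eval_nat_numeral)
  have "flat_exp_higher_deriv (Suc n) x =
      inverse x ^ 2 * (poly ?P (inverse x) - poly (pderiv ?P) (inverse x)) * exp (- inverse x)"
    using assms by (simp add: flat_exp_higher_deriv_def poly_monom)
  also have "\<dots> = (poly (pderiv ?P) (inverse x) * (- (inverse x ^ 2))) * exp (- inverse x)
      + (exp (- inverse x) * (inverse x ^ 2)) * poly ?P (inverse x)"
    by (simp add: algebra_simps)
  finally have "((\<lambda>x. poly ?P (inverse x) * exp (- inverse x)) has_real_derivative
      flat_exp_higher_deriv (Suc n) x) (at x)"
    using DERIV_mult[OF h1 h2] by simp
  then show ?thesis
    by (rule has_field_derivative_transform_within_open[of _ _ _ "{0<..}"])
      (use assms in \<open>auto simp: flat_exp_higher_deriv_def\<close>)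
qed

lemma flat_exp_higher_deriv_has_derivative_0:
  "(flat_exp_higher_deriv n has_real_derivative 0) (at 0)"
proof -
  let ?q = "\<lambda>y. (flat_exp_higher_deriv n y - flat_exp_higher_deriv n 0) / (y - 0)"
  have "(?q \<longlongrightarrow> 0) (at 0)"
  proof (rule filterlim_split_at)
    have "\<forall>\<^sub>F y in at_left (0::real). ?q y = 0"
      by (auto simp: eventually_at_left_field flat_exp_higher_deriv_def intro: exI[of _ "-1"])
    then show "(?q \<longlongrightarrow> 0) (at_left 0)" by (rule tendsto_eventually)
  next
    have lim: "((\<lambda>y. poly (flat_exp_poly n) (inverse y) * inverse y * exp (- inverse y)) \<longlongrightarrow> 0)
        (at_right 0)"
      using filterlim_compose[OF poly_times_exp_neg_tendsto_0 filterlim_inverse_at_top_right] .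
    have "\<forall>\<^sub>F y in at_right (0::real).
        poly (flat_exp_poly n) (inverse y) * inverse y * exp (- inverse y) = ?q y"
      by (auto simp: eventually_at_right_field flat_exp_higher_deriv_def divide_inverse
          intro: exI[of _ 1])
    then show "(?q \<longlongrightarrow> 0) (at_right 0)" using lim tendsto_cong by fastforce
  qed
  then show ?thesis by (simp add: has_field_derivative_iff)
qed

lemma flat_exp_higher_deriv_has_derivative:
  "(flat_exp_higher_deriv n has_real_derivative flat_exp_higher_deriv (Suc n) x) (at x)"
proof -
  consider "0 < x" | "x < 0" | "x = 0" by linarith
  then show ?thesis
  proof cases
    case 1
    then show ?thesis by (rule flat_exp_higher_deriv_has_derivative_pos)
  next
    case 2
    have "((\<lambda>x. 0) has_real_derivative flat_exp_higher_deriv (Suc n) x) (at x)"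
      using 2 by (simp add: flat_exp_higher_deriv_def)
    then show ?thesis
      by (rule has_field_derivative_transform_within_open[of _ _ _ "{..<0}"])
        (use 2 in \<open>auto simp: flat_exp_higher_deriv_def\<close>)
  next
    case 3
    then show ?thesis
      using flat_exp_higher_deriv_has_derivative_0 by (simp add: flat_exp_higher_deriv_def[of "Suc n"])
  qed
qed

lemma higher_deriv_flat_exp: "(deriv ^^ n) flat_exp = flat_exp_higher_deriv n"
proof (induction n)
  case 0
  then show ?case by (auto simp: flat_exp_def flat_exp_higher_deriv_def)
next
  case (Suc n)
  then show ?case by (auto intro!: ext DERIV_imp_deriv flat_exp_higher_deriv_has_derivative)
qed

lemma smooth_near_flat_exp: "smooth_near flat_exp x"
proof -
  have "\<forall>n s. flat_exp_higher_deriv n differentiable (at s)"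
    using flat_exp_higher_deriv_has_derivative real_differentiable_def by blast
  then show ?thesis unfolding smooth_near_def higher_deriv_flat_exp by (intro exI[of _ 1]) simp
qed

lemma flat_exp_nonneg: "flat_exp x \<ge> 0"
  by (simp add: flat_exp_def)

lemma flat_exp_pos: "x > 0 \<Longrightarrow> flat_exp x > 0"
  by (simp add: flat_exp_def)

lemma flat_exp_eq_0: "x \<le> 0 \<Longrightarrow> flat_exp x = 0"
  by (simp add: flat_exp_def)

definition smooth_step :: "real \<Rightarrow> real \<Rightarrow> real" where
  "smooth_step d x = flat_exp x * inverse (flat_exp x + flat_exp (d - x))"

lemma smooth_step_denom_pos: "d > 0 \<Longrightarrow> flat_exp x + flat_exp (d - x) > 0"
  using flat_exp_pos[of x] flat_exp_pos[of "d - x"] flat_exp_nonneg[of x] flat_exp_nonneg[of "d - x"]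
  by (cases "x > 0") linarith+

lemma smooth_near_smooth_step: "d > 0 \<Longrightarrow> smooth_near (smooth_step d) x"
  unfolding smooth_step_def
  by (intro smooth_near_mult smooth_near_flat_exp smooth_near_inverse smooth_near_add
      smooth_near_reflect)
    (use smooth_step_denom_pos in \<open>auto simp: less_imp_neq[symmetric]\<close>)

lemma smooth_step_eq_0: "x \<le> 0 \<Longrightarrow> smooth_step d x = 0"
  by (simp add: smooth_step_def flat_exp_eq_0)

lemma smooth_step_eq_1: "d > 0 \<Longrightarrow> x \<ge> d \<Longrightarrow> smooth_step d x = 1"
  using smooth_step_denom_pos[of d x] by (simp add: smooth_step_def flat_exp_eq_0)

lemma smooth_step_nonneg: "d > 0 \<Longrightarrow> smooth_step d x \<ge> 0"
  using smooth_step_denom_pos[of d x] flat_exp_nonneg[of x] by (simp add: smooth_step_def)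

lemma smooth_step_le_1: "d > 0 \<Longrightarrow> smooth_step d x \<le> 1"
  using smooth_step_denom_pos[of d x] flat_exp_nonneg[of x] flat_exp_nonneg[of "d - x"]
  by (simp add: smooth_step_def field_simps)

definition plateau :: "real \<Rightarrow> real \<Rightarrow> real \<Rightarrow> real" where
  "plateau d p t = smooth_step d (t - (p - 2 * d)) * smooth_step d ((p + 2 * d) - t)"

lemma smooth_near_plateau: "d > 0 \<Longrightarrow> smooth_near (plateau d p) x"
  unfolding plateau_def
  by (intro smooth_near_mult smooth_near_shift smooth_near_reflect smooth_near_smooth_step)

lemma plateau_eq_1: "d > 0 \<Longrightarrow> \<bar>t - p\<bar> \<le> d \<Longrightarrow> plateau d p t = 1"
  unfolding plateau_def by (subst smooth_step_eq_1, simp, simp)+ simp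

lemma plateau_eq_0: "\<bar>t - p\<bar> \<ge> 2 * d \<Longrightarrow> plateau d p t = 0"
  unfolding plateau_def by (cases "t \<le> p") (auto simp: smooth_step_eq_0)

lemma plateau_nonneg: "d > 0 \<Longrightarrow> plateau d p t \<ge> 0"
  unfolding plateau_def by (intro mult_nonneg_nonneg smooth_step_nonneg)

lemma plateau_le_1: "d > 0 \<Longrightarrow> plateau d p t \<le> 1"
  unfolding plateau_def by (intro mult_le_one smooth_step_le_1 smooth_step_nonneg)

lemma smooth_near_plateau_mult:
  assumes "d > 0" "2 * d < R" "\<And>s. \<bar>s - p\<bar> < R \<Longrightarrow> smooth_near G s"
  shows "smooth_near (\<lambda>y. plateau d p y * G y) x"
proof (cases "\<bar>x - p\<bar> < R")
  case True
  then show ?thesis using assms by (intro smooth_near_mult smooth_near_plateau) auto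
next
  case False
  have "open {y. 2 * d < \<bar>y - p\<bar>}" by (intro open_Collect_less continuous_intros)
  then show ?thesis
    by (rule smooth_near_cong[OF smooth_near_const])
      (use False assms plateau_eq_0[of d _ p] in auto)
qed

definition bump :: "real \<Rightarrow> real \<Rightarrow> real \<Rightarrow> real" where
  "bump p h t = flat_exp (t - (p - h)) * flat_exp ((p + h) - t)"

lemma smooth_near_bump: "smooth_near (bump p h) x"
  unfolding bump_def by (intro smooth_near_mult smooth_near_shift smooth_near_reflect smooth_near_flat_exp)

lemma bump_nonneg: "bump p h t \<ge> 0"
  unfolding bump_def by (intro mult_nonneg_nonneg flat_exp_nonneg)

lemma bump_eq_0: "\<bar>t - p\<bar> \<ge> h \<Longrightarrow> bump p h t = 0"
  unfolding bump_def by (cases "t \<le> p") (auto simp: flat_exp_eq_0)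

lemma bump_pos: "\<bar>t - p\<bar> < h \<Longrightarrow> bump p h t > 0"
  unfolding bump_def by (intro mult_pos_pos flat_exp_pos) auto

lemma integral_pos_if_pos_at:
  fixes f :: "real \<Rightarrow> real"
  assumes "continuous_on {a..b} f" "a < b" "\<And>x. x \<in> {a..b} \<Longrightarrow> f x \<ge> 0" "m \<in> {a..b}" "f m > 0"
  shows "integral {a..b} f > 0"
proof -
  have "integral {a..b} f \<ge> 0"
    using assms by (intro integral_nonneg integrable_continuous_real) auto
  moreover have "integral {a..b} f \<noteq> 0"
    using integral_eq_0_iff[OF assms(1,2,3)] assms(4,5) by auto
  ultimately show ?thesis by linarith
qed

lemma integral_neg_if_neg_at:
  fixes f :: "real \<Rightarrow> real"
  assumes "continuous_on {a..b} f" "a < b" "\<And>x. x \<in> {a..b} \<Longrightarrow> f x \<le> 0" "m \<in> {a..b}" "f m < 0"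
  shows "integral {a..b} f < 0"
proof -
  have "integral {a..b} (\<lambda>x. - f x) > 0"
    using assms by (intro integral_pos_if_pos_at[of a b _ m] continuous_intros) auto
  then show ?thesis by (simp add: integral_neg integrable_continuous_real assms(1))
qed

lemma sgn_limit_eq:
  fixes f :: "'a \<Rightarrow> real"
  assumes "(f \<longlongrightarrow> L) F" "F \<noteq> bot" "eventually (\<lambda>t. sgn (f t) = s) F" "L \<noteq> 0" "s \<noteq> 0"
  shows "sgn L = s"
proof -
  obtain t where "sgn (f t) = s" using eventually_happens[OF assms(3)] assms(2) by auto
  then have "s = 1 \<or> s = -1" using assms(5) by (auto simp: sgn_if split: if_splits)
  then show ?thesis
  proof
    assume s: "s = 1"
    have "eventually (\<lambda>t. 0 \<le> f t) F"
      using assms(3) by (rule eventually_mono) (auto simp: s sgn_if split: if_splits)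
    then have "0 \<le> L" using tendsto_lowerbound[OF assms(1)] assms(2) by blast
    then show ?thesis using assms(4) s by simp
  next
    assume s: "s = -1"
    have "eventually (\<lambda>t. f t \<le> 0) F"
      using assms(3) by (rule eventually_mono) (auto simp: s sgn_if split: if_splits)
    then have "L \<le> 0" using tendsto_upperbound[OF assms(1)] assms(2) by blast
    then show ?thesis using assms(4) s by simp
  qed
qed

lemma isCont_pos_near:
  fixes f :: "real \<Rightarrow> real"
  assumes "isCont f x" "f x > 0"
  obtains \<epsilon> where "\<epsilon> > 0" "\<And>y. \<bar>y - x\<bar> < \<epsilon> \<Longrightarrow> f y > 0"
proof -
  have "\<forall>\<^sub>F y in nhds x. f y > 0"
    using assms by (simp add: isCont_def order_tendstoD(1) tendsto_nhds_iff)
  then show ?thesis using that by (auto simp: eventually_nhds_metric dist_real_def)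
qed

lemma finite_if_subsingleton: "(\<And>x y. x \<in> A \<Longrightarrow> y \<in> A \<Longrightarrow> x = y) \<Longrightarrow> finite A"
  by (metis finite.emptyI finite_insert insertI1 subsetI finite_subset equals0I)

lemma closed_walk_telescope:
  fixes F :: "'v \<Rightarrow> real"
  assumes "closed_walk E src tgt w"
  shows "(\<Sum>s\<leftarrow>w. F (wend src tgt s) - F (wstart src tgt s)) = 0"
proof -
  have ne: "w \<noteq> []"
    and chain: "\<And>i. Suc i < length w \<Longrightarrow> wend src tgt (w ! i) = wstart src tgt (w ! Suc i)"
    and closed: "wend src tgt (last w) = wstart src tgt (hd w)"
    using assms by (auto simp: closed_walk_def)
  obtain k where k: "length w = Suc k" using ne by (cases w) auto
  have "(\<Sum>s\<leftarrow>w. F (wend src tgt s) - F (wstart src tgt s)) =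
      (\<Sum>i<Suc k. F (wend src tgt (w ! i))) - (\<Sum>i<Suc k. F (wstart src tgt (w ! i)))"
    by (simp add: sum_list_sum_nth k atLeast0LessThan sum_subtractf)
  also have "(\<Sum>i<Suc k. F (wstart src tgt (w ! i))) =
      F (wstart src tgt (w ! 0)) + (\<Sum>i<k. F (wstart src tgt (w ! Suc i)))"
    by (rule sum.lessThan_Suc_shift)
  also have "(\<Sum>i<k. F (wstart src tgt (w ! Suc i))) = (\<Sum>i<k. F (wend src tgt (w ! i)))"
    using chain k by (intro sum.cong) auto
  also have "wstart src tgt (w ! 0) = wend src tgt (w ! k)"
    using closed ne k by (simp add: hd_conv_nth last_conv_nth)
  finally show ?thesis by simp
qed

lemma exact_form_if_potential:
  assumes "\<And>e. e \<in> E \<Longrightarrow> integral {fv (src e)..fv (tgt e)} (h e) = F (tgt e) - F (src e)"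
  shows "exact_form E src tgt fv h"
  unfolding exact_form_def
proof (intro allI impI)
  fix w assume w: "closed_walk E src tgt w"
  have "fst s \<in> E" if "s \<in> set w" for s using w that by (auto simp: closed_walk_def)
  then have "cycle_integral src tgt fv h w = (\<Sum>s\<leftarrow>w. F (wend src tgt s) - F (wstart src tgt s))"
    unfolding cycle_integral_def
    by (intro arg_cong[where f=sum_list] map_cong) (auto simp: assms wend_def wstart_def)
  then show "cycle_integral src tgt fv h w = 0" using closed_walk_telescope[OF w] by simp
qed

section \<open>The circulation function on an edge\<close>

locale reeb_form_setting =
  fixes V :: "'v set" and E :: "'e set" and src tgt :: "'e \<Rightarrow> 'v"
    and fv :: "'v \<Rightarrow> real" and B :: "'v set"
    and dens c :: "'e \<Rightarrow> real \<Rightarrow> real"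
    and r :: "('v, 'e) gpt \<Rightarrow> real" and g :: "('v, 'e) gpt \<Rightarrow> real \<Rightarrow> real"
  assumes reeb: "reeb_graph V E src tgt fv B"
    and measure: "log_smooth V E src tgt fv dens"
    and circulation: "circulation V E src tgt fv B dens c"
    and balanced: "balanced V E src tgt fv c"
    and local_forms: "\<forall>p\<in>exceptional V E src tgt fv c. local_form_ok E src tgt fv c p (r p) (g p)"
begin

abbreviation lo :: "'e \<Rightarrow> real" where "lo e \<equiv> fv (src e)"
abbreviation hi :: "'e \<Rightarrow> real" where "hi e \<equiv> fv (tgt e)"

lemma finite_edges: "finite E"
  using reeb by (simp add: reeb_graph_def)

lemma edge_ends: "e \<in> E \<Longrightarrow> src e \<in> V \<and> tgt e \<in> V \<and> lo e < hi e"
  using reeb by (simp add: reeb_graph_def)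

lemma density_smooth_pos:
  "e \<in> E \<Longrightarrow> lo e < t \<Longrightarrow> t < hi e \<Longrightarrow> smooth_near (dens e) t \<and> dens e t > 0"
  using measure by (simp add: log_smooth_def)

lemma circulation_increment:
  "e \<in> E \<Longrightarrow> lo e < x \<Longrightarrow> x \<le> y \<Longrightarrow> y < hi e \<Longrightarrow>
    c e y - c e x = integral {x..y} (\<lambda>t. t * dens e t)"
  using circulation by (simp add: circulation_def)

lemma circulation_one_sided_limits:
  "e \<in> E \<Longrightarrow> (\<exists>L. (c e \<longlongrightarrow> L) (at_right (lo e))) \<and> (\<exists>L. (c e \<longlongrightarrow> L) (at_left (hi e)))"
  using circulation by (simp add: circulation_def)

lemma smooth_near_weighted_density:
  "e \<in> E \<Longrightarrow> lo e < t \<Longrightarrow> t < hi e \<Longrightarrow> smooth_near (\<lambda>t. t * dens e t) t"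
  using density_smooth_pos by (intro smooth_near_mult smooth_near_ident) auto

lemma continuous_on_weighted_density:
  "e \<in> E \<Longrightarrow> lo e < x \<Longrightarrow> y < hi e \<Longrightarrow> continuous_on {x..y} (\<lambda>t. t * dens e t)"
  by (intro continuous_at_imp_continuous_on ballI smooth_near_imp_isCont smooth_near_weighted_density)
    auto

lemma circulation_has_derivative:
  assumes "e \<in> E" "lo e < x" "x < hi e"
  shows "(c e has_real_derivative x * dens e x) (at x)"
proof -
  define a where "a = (lo e + x) / 2"
  define b where "b = (x + hi e) / 2"
  have ab: "lo e < a" "a < x" "x < b" "b < hi e" using assms by (auto simp: a_def b_def)
  have "((\<lambda>u. integral {a..u} (\<lambda>t. t * dens e t)) has_vector_derivative x * dens e x) (at x within {a..b})"
    using ab by (intro integral_has_vector_derivative continuous_on_weighted_density assms) auto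
  then have "((\<lambda>u. integral {a..u} (\<lambda>t. t * dens e t)) has_real_derivative x * dens e x) (at x)"
    using ab by (simp add: at_within_Icc_at has_real_derivative_iff_has_vector_derivative)
  then have "((\<lambda>u. c e a + integral {a..u} (\<lambda>t. t * dens e t)) has_real_derivative x * dens e x) (at x)"
    by (intro DERIV_add[where D=0, simplified] DERIV_const)
  then show ?thesis
  proof (rule has_field_derivative_transform_within_open[where S="{a<..<b}"])
    fix u assume "u \<in> {a<..<b}"
    then show "c e a + integral {a..u} (\<lambda>t. t * dens e t) = c e u"
      using circulation_increment[OF assms(1), of a u] ab by auto
  qed (use ab in auto)
qed

lemma smooth_near_circulation:
  assumes "e \<in> E" "lo e < x" "x < hi e"
  shows "smooth_near (c e) x"
proof (rule smooth_nearI[of "{lo e<..<hi e}"])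
  fix n
  show "higher_differentiable_on n {lo e<..<hi e} (c e)"
  proof (cases n)
    case (Suc m)
    have "higher_differentiable_on m {lo e<..<hi e} (\<lambda>t. t * dens e t)"
      using smooth_near_weighted_density[OF assms(1)]
      by (intro higher_differentiable_on_if_smooth_near) auto
    then have "higher_differentiable_on m {lo e<..<hi e} (deriv (c e))"
      by (rule higher_differentiable_on_cong[rotated 2])
        (use circulation_has_derivative[OF assms(1)] in \<open>auto intro: DERIV_imp_deriv[symmetric]\<close>)
    moreover have "\<forall>s\<in>{lo e<..<hi e}. c e differentiable at s"
      using circulation_has_derivative[OF assms(1)] real_differentiable_def by fastforce
    ultimately show ?thesis using Suc by (simp add: higher_differentiable_on_Suc)
  qed simp
qed (use assms in auto)

lemma isCont_circulation: "e \<in> E \<Longrightarrow> lo e < x \<Longrightarrow> x < hi e \<Longrightarrow> isCont (c e) x"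
  using smooth_near_circulation smooth_near_imp_isCont by blast

lemma isCont_f_circulation: "e \<in> E \<Longrightarrow> lo e < x \<Longrightarrow> x < hi e \<Longrightarrow> isCont (\<lambda>t. t * c e t) x"
  using isCont_circulation by (intro continuous_intros) auto

lemma circulation_strict_mono_nonneg:
  assumes "e \<in> E" "lo e < x" "x < y" "y < hi e" "0 \<le> x"
  shows "c e x < c e y"
proof -
  have "integral {x..y} (\<lambda>t. t * dens e t) > 0"
  proof (rule integral_pos_if_pos_at[of x y _ y])
    show "continuous_on {x..y} (\<lambda>t. t * dens e t)"
      using assms by (intro continuous_on_weighted_density) auto
    show "t * dens e t \<ge> 0" if "t \<in> {x..y}" for t
      using that assms density_smooth_pos[of e t] by auto
    show "y * dens e y > 0" using assms density_smooth_pos[of e y] by auto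
  qed (use assms in auto)
  then show ?thesis using circulation_increment[of e x y] assms by auto
qed

lemma circulation_strict_antimono_nonpos:
  assumes "e \<in> E" "lo e < x" "x < y" "y < hi e" "y \<le> 0"
  shows "c e x > c e y"
proof -
  have "integral {x..y} (\<lambda>t. t * dens e t) < 0"
  proof (rule integral_neg_if_neg_at[of x y _ x])
    show "continuous_on {x..y} (\<lambda>t. t * dens e t)"
      using assms by (intro continuous_on_weighted_density) auto
    show "t * dens e t \<le> 0" if "t \<in> {x..y}" for t
      using that assms density_smooth_pos[of e t] by (auto intro!: mult_nonpos_nonneg)
    show "x * dens e x < 0" using assms density_smooth_pos[of e x] by (auto intro!: mult_neg_pos)
  qed (use assms in auto)
  then show ?thesis using circulation_increment[of e x y] assms by auto
qed

definition zero_params :: "'e \<Rightarrow> real set" where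
  "zero_params e = {t. lo e < t \<and> t < hi e \<and> (t = 0 \<or> c e t = 0)}"

abbreviation exceptional_points :: "('v, 'e) gpt set" where
  "exceptional_points \<equiv> exceptional V E src tgt fv c"

lemma EPt_exceptional_iff: "EPt e t \<in> exceptional_points \<longleftrightarrow> e \<in> E \<and> t \<in> zero_params e"
  by (auto simp: exceptional_def zero_params_def)

lemma Vert_exceptional_iff: "Vert v \<in> exceptional_points \<longleftrightarrow> v \<in> V"
  by (auto simp: exceptional_def)

lemma finite_zero_params:
  assumes "e \<in> E"
  shows "finite (zero_params e)"
proof -
  have "finite {t \<in> zero_params e. t < 0}"
  proof (rule finite_if_subsingleton)
    fix x y assume "x \<in> {t \<in> zero_params e. t < 0}" "y \<in> {t \<in> zero_params e. t < 0}"
    then show "x = y"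
      using circulation_strict_antimono_nonpos[OF assms, of x y]
        circulation_strict_antimono_nonpos[OF assms, of y x]
      by (cases x y rule: linorder_cases) (auto simp: zero_params_def)
  qed
  moreover have "finite {t \<in> zero_params e. t > 0}"
  proof (rule finite_if_subsingleton)
    fix x y assume "x \<in> {t \<in> zero_params e. t > 0}" "y \<in> {t \<in> zero_params e. t > 0}"
    then show "x = y"
      using circulation_strict_mono_nonneg[OF assms, of x y]
        circulation_strict_mono_nonneg[OF assms, of y x]
      by (cases x y rule: linorder_cases) (auto simp: zero_params_def)
  qed
  moreover have "zero_params e \<subseteq> {0} \<union> {t \<in> zero_params e. t < 0} \<union> {t \<in> zero_params e. t > 0}"
    by auto
  ultimately show ?thesis using finite_subset by blast
qed

text \<open>Adding to \<open>\<beta>\<close> a bump times \<open>-c df\<close> supported where \<open>s \<cdot> f c > 0\<close> changes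
  \<open>\<integral>\<^sub>e f \<beta>\<close> by a quantity of sign \<open>-s\<close>.\<close>

definition sign_region :: "'e \<Rightarrow> real \<Rightarrow> bool" where
  "sign_region e s \<longleftrightarrow> (\<exists>t. lo e < t \<and> t < hi e \<and> s * (t * c e t) > 0)"

lemma sign_regionI: "lo e < t \<Longrightarrow> t < hi e \<Longrightarrow> s * (t * c e t) > 0 \<Longrightarrow> sign_region e s"
  unfolding sign_region_def by blast

lemma sign_regions_if_sign_change:
  assumes "lo e < x" "x < hi e" "lo e < y" "y < hi e" "x * c e x < 0" "y * c e y > 0"
  shows "sign_region e 1 \<and> sign_region e (-1)"
  using assms sign_regionI[of e x "-1"] sign_regionI[of e y 1] by auto

lemma sign_regions_at_zero:
  assumes e: "e \<in> E" and z: "lo e < 0" "0 < hi e"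
  shows "sign_region e 1 \<and> sign_region e (-1)"
proof (cases "c e 0 \<ge> 0")
  case True
  have "c e (lo e / 2) > c e 0" "c e 0 < c e (hi e / 2)"
    using circulation_strict_antimono_nonpos[OF e, of "lo e / 2" 0]
      circulation_strict_mono_nonneg[OF e, of 0 "hi e / 2"] z by auto
  then show ?thesis
    using z True by (intro sign_regions_if_sign_change[of e "lo e / 2" "hi e / 2"])
      (auto simp: mult_neg_pos)
next
  case False
  have "isCont (\<lambda>t. - c e t) 0" using isCont_circulation[OF e] z by (auto intro: continuous_intros)
  then obtain \<epsilon> where "\<epsilon> > 0" and neg: "\<And>t. \<bar>t - 0\<bar> < \<epsilon> \<Longrightarrow> - c e t > 0"
    by (rule isCont_pos_near) (use False in auto)
  define x where "x = max (lo e / 2) (- \<epsilon> / 2)"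
  define y where "y = min (hi e / 2) (\<epsilon> / 2)"
  have "c e x < 0" "c e y < 0" using neg[of x] neg[of y] \<open>\<epsilon> > 0\<close> z by (auto simp: x_def y_def)
  then show ?thesis
    using z \<open>\<epsilon> > 0\<close> by (intro sign_regions_if_sign_change[of e y x])
      (auto simp: x_def y_def mult_pos_neg mult_neg_neg)
qed

lemma sign_regions_at_zero_param:
  assumes e: "e \<in> E" and z: "z \<in> zero_params e"
  shows "sign_region e 1 \<and> sign_region e (-1)"
proof -
  have z: "lo e < z" "z < hi e" "z = 0 \<or> c e z = 0" using z by (auto simp: zero_params_def)
  consider "z > 0" | "z < 0" | "z = 0" by linarith
  then show ?thesis
  proof cases
    case 1
    define x where "x = (max (lo e) 0 + z) / 2"
    define y where "y = (z + hi e) / 2"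
    have xy: "0 < x" "lo e < x" "x < z" "z < y" "y < hi e" using z 1 by (auto simp: x_def y_def)
    then have "c e x < c e z" "c e z < c e y"
      using circulation_strict_mono_nonneg[OF e, of x z] circulation_strict_mono_nonneg[OF e, of z y]
      by auto
    then show ?thesis
      using z 1 xy by (intro sign_regions_if_sign_change[of e x y]) (auto simp: mult_pos_neg)
  next
    case 2
    define x where "x = (lo e + z) / 2"
    define y where "y = (z + min (hi e) 0) / 2"
    have xy: "lo e < x" "x < z" "z < y" "y < 0" "y < hi e" using z 2 by (auto simp: x_def y_def)
    then have "c e x > c e z" "c e z > c e y"
      using circulation_strict_antimono_nonpos[OF e, of x z]
        circulation_strict_antimono_nonpos[OF e, of z y] z by auto
    then show ?thesis
      using z 2 xy by (intro sign_regions_if_sign_change[of e x y]) (auto simp: mult_neg_pos mult_neg_neg)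
  qed (use sign_regions_at_zero[OF e] z in auto)
qed

definition mid :: "'e \<Rightarrow> real" where "mid e = (lo e + hi e) / 2"

lemma mid_between: "e \<in> E \<Longrightarrow> lo e < mid e \<and> mid e < hi e"
  using edge_ends[of e] by (auto simp: mid_def)

lemma sign_region_exists:
  assumes "e \<in> E"
  shows "sign_region e 1 \<or> sign_region e (-1)"
proof (cases "mid e \<in> zero_params e")
  case True
  then show ?thesis using sign_regions_at_zero_param[OF assms] by blast
next
  case False
  then have "mid e * c e (mid e) \<noteq> 0"
    using mid_between[OF assms] by (auto simp: zero_params_def)
  then have "mid e * c e (mid e) > 0 \<or> (-1) * (mid e * c e (mid e)) > 0"
    by linarith
  then show ?thesis
    using mid_between[OF assms] sign_regionI[of e "mid e" 1] sign_regionI[of e "mid e" "-1"] by auto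
qed

lemma sign_without_sign_region:
  assumes "e \<in> E" "s \<in> {1, -1}" "\<not> sign_region e s" "lo e < t" "t < hi e"
  shows "s * (t * c e t) < 0"
proof -
  have "t \<notin> zero_params e" using sign_regions_at_zero_param assms by blast
  then have "s * (t * c e t) \<noteq> 0" using assms by (auto simp: zero_params_def)
  moreover have "\<not> s * (t * c e t) > 0" using assms(3-5) sign_regionI by blast
  ultimately show ?thesis by linarith
qed

section \<open>Vertex signs and the target potential\<close>

definition one_signed_edge :: "'e \<Rightarrow> bool" where
  "one_signed_edge e \<longleftrightarrow> e \<in> E \<and> \<not> (sign_region e 1 \<and> sign_region e (-1))"

lemma one_signed_edgeE:
  assumes "one_signed_edge e"
  obtains s where "s \<in> {1, -1}" "\<And>t. lo e < t \<Longrightarrow> t < hi e \<Longrightarrow> s * (t * c e t) < 0"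
  using assms sign_without_sign_region unfolding one_signed_edge_def by blast

lemma one_signed_edge_signs:
  assumes "one_signed_edge e"
  shows "0 \<le> lo e \<or> hi e \<le> 0"
    and "\<And>t. lo e < t \<Longrightarrow> t < hi e \<Longrightarrow> sgn (c e t) = sgn (c e (mid e))"
    and "c e (mid e) \<noteq> 0"
proof -
  have e: "e \<in> E" using assms by (simp add: one_signed_edge_def)
  obtain s where s: "s \<in> {1, -1}" and H: "\<And>t. lo e < t \<Longrightarrow> t < hi e \<Longrightarrow> s * (t * c e t) < 0"
    using one_signed_edgeE[OF assms] by blast
  show lh: "0 \<le> lo e \<or> hi e \<le> 0"
    using H[of 0] by force
  have m: "lo e < mid e" "mid e < hi e" using mid_between[OF e] by auto
  show "sgn (c e t) = sgn (c e (mid e))" if "lo e < t" "t < hi e" for t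
  proof -
    have "sgn t = sgn (mid e)" using lh that m by (auto simp: sgn_if)
    moreover have "sgn (s * (t * c e t)) = sgn (s * (mid e * c e (mid e)))"
      using H[of t] H[of "mid e"] that m by simp
    moreover have "t \<noteq> 0" "s \<noteq> 0" using H[of t] that by auto
    ultimately show ?thesis by (auto simp: sgn_mult sgn_0_0)
  qed
  show "c e (mid e) \<noteq> 0" using H[OF m] by auto
qed

lemma sgn_lim_at_one_signed_edge:
  assumes e: "one_signed_edge e" and v: "src e = v \<or> tgt e = v"
    and nz: "lim_at src tgt fv c v e \<noteq> 0"
  shows "sgn (lim_at src tgt fv c v e) = sgn (c e (mid e))"
proof -
  have "e \<in> E" using e by (simp add: one_signed_edge_def)
  then have lh: "lo e < hi e" using edge_ends by simp
  have signs: "\<And>t. lo e < t \<Longrightarrow> t < hi e \<Longrightarrow> sgn (c e t) = sgn (c e (mid e))"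
    and "sgn (c e (mid e)) \<noteq> 0"
    using one_signed_edge_signs[OF e] by (auto simp: sgn_0_0)
  show ?thesis
  proof (cases "tgt e = v")
    case True
    obtain L where L: "(c e \<longlongrightarrow> L) (at_left (hi e))"
      using circulation_one_sided_limits[OF \<open>e \<in> E\<close>] by blast
    have "eventually (\<lambda>t. sgn (c e t) = sgn (c e (mid e))) (at_left (hi e))"
      using eventually_at_left_real[OF lh] by (rule eventually_mono) (auto intro: signs)
    then show ?thesis
      using sgn_limit_eq[OF L] nz \<open>sgn (c e (mid e)) \<noteq> 0\<close> True L
      by (simp add: lim_at_def lim_tgt_def tendsto_Lim)
  next
    case False
    obtain L where L: "(c e \<longlongrightarrow> L) (at_right (lo e))"
      using circulation_one_sided_limits[OF \<open>e \<in> E\<close>] by blast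
    have "eventually (\<lambda>t. sgn (c e t) = sgn (c e (mid e))) (at_right (lo e))"
      using eventually_at_right_real[OF lh] by (rule eventually_mono) (auto intro: signs)
    then show ?thesis
      using sgn_limit_eq[OF L] nz \<open>sgn (c e (mid e)) \<noteq> 0\<close> False v L
      by (simp add: lim_at_def lim_src_def tendsto_Lim)
  qed
qed

lemma valence_1_or_3: "v \<in> V \<Longrightarrow> valence E src tgt v = 1 \<or> valence E src tgt v = 3"
  using reeb by (auto simp: reeb_graph_def valence_def)

lemma leaf_edge_unique:
  assumes v: "valence E src tgt v = 1"
    and e: "e \<in> E" "incident src tgt v e" and e': "e' \<in> E" "incident src tgt v e'"
  shows "e = e'"
proof -
  have "card {e\<in>E. tgt e = v} + card {e\<in>E. src e = v} = 1"
    using v by (simp add: valence_def indeg_def outdeg_def)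
  moreover have "finite {e\<in>E. tgt e = v}" "finite {e\<in>E. src e = v}"
    using finite_edges by auto
  ultimately obtain x where "{e\<in>E. incident src tgt v e} = {x}"
    by (auto simp: incident_def card_1_singleton_iff add_is_1)
  then have "e \<in> {x}" "e' \<in> {x}" using e e' by blast+
  then show ?thesis by simp
qed

definition one_signed_edge_at :: "'v \<Rightarrow> 'e" where
  "one_signed_edge_at v = (SOME e. one_signed_edge e \<and> incident src tgt v e)"

definition vertex_sign :: "'v \<Rightarrow> real" where
  "vertex_sign v = sgn (c (one_signed_edge_at v) (mid (one_signed_edge_at v)))"

lemma vertex_sign_eq:
  assumes e: "one_signed_edge e" "incident src tgt v e"
  shows "vertex_sign v = sgn (c e (mid e))"
proof -
  have "e \<in> E" using e by (simp add: one_signed_edge_def)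
  then have v: "v \<in> V" using edge_ends e(2) by (auto simp: incident_def)
  let ?e' = "one_signed_edge_at v"
  have e': "one_signed_edge ?e' \<and> incident src tgt v ?e'"
    unfolding one_signed_edge_at_def by (rule someI_ex) (use e in blast)
  then have "?e' \<in> E" by (simp add: one_signed_edge_def)
  show ?thesis
  proof (cases "valence E src tgt v = 1")
    case True
    then have "?e' = e" using leaf_edge_unique \<open>?e' \<in> E\<close> e' \<open>e \<in> E\<close> e(2) by blast
    then show ?thesis by (simp add: vertex_sign_def)
  next
    case False
    then have "valence E src tgt v = 3" using valence_1_or_3[OF v] by simp
    then have "(\<forall>e\<in>E. incident src tgt v e \<longrightarrow> lim_at src tgt fv c v e > 0) \<or>
        (\<forall>e\<in>E. incident src tgt v e \<longrightarrow> lim_at src tgt fv c v e < 0)"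
      using balanced v by (simp add: balanced_def)
    then have "sgn (lim_at src tgt fv c v e) = sgn (lim_at src tgt fv c v ?e')"
      and "lim_at src tgt fv c v e \<noteq> 0" "lim_at src tgt fv c v ?e' \<noteq> 0"
      using \<open>e \<in> E\<close> \<open>?e' \<in> E\<close> e(2) e' by auto
    then show ?thesis
      using sgn_lim_at_one_signed_edge[of e v] sgn_lim_at_one_signed_edge[of ?e' v] e e'
      by (auto simp: vertex_sign_def incident_def)
  qed
qed

definition potential :: "'v \<Rightarrow> real" where
  "potential v = - vertex_sign v * \<bar>fv v\<bar>"

definition potential_step :: "'e \<Rightarrow> real" where
  "potential_step e = potential (tgt e) - potential (src e)"

lemma potential_step_one_signed:
  assumes "one_signed_edge e"
  shows "potential_step e = - sgn (c e (mid e)) * (\<bar>hi e\<bar> - \<bar>lo e\<bar>)"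
  using vertex_sign_eq[OF assms, of "src e"] vertex_sign_eq[OF assms, of "tgt e"]
  by (simp add: potential_step_def potential_def incident_def algebra_simps)

lemma sign_potential_step_without_sign_region:
  assumes e: "e \<in> E" and s: "s \<in> {1, -1}" and no: "\<not> sign_region e s"
  shows "s * potential_step e > 0"
proof -
  have one: "one_signed_edge e" using e s no by (auto simp: one_signed_edge_def)
  have m: "lo e < mid e" "mid e < hi e" and lh: "lo e < hi e" using mid_between[OF e] by auto
  have neg: "s * (mid e * c e (mid e)) < 0" using sign_without_sign_region[OF e s no m] .
  have step: "s * potential_step e = - sgn (s * c e (mid e)) * (\<bar>hi e\<bar> - \<bar>lo e\<bar>)"
    using potential_step_one_signed[OF one] s by (auto simp: sgn_mult)
  consider "0 \<le> lo e" | "hi e \<le> 0" using one_signed_edge_signs(1)[OF one] by blast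
  then show ?thesis
  proof cases
    case 1
    then have "s * c e (mid e) < 0"
      using neg m by (auto simp: mult.left_commute[of s] mult_less_0_iff)
    then show ?thesis using 1 lh step by simp
  next
    case 2
    then have "s * c e (mid e) > 0"
      using neg m by (auto simp: mult.left_commute[of s] mult_less_0_iff)
    then show ?thesis using 2 lh step by simp
  qed
qed

section \<open>Gluing the local forms\<close>

definition special_params :: "'e \<Rightarrow> real set" where
  "special_params e = {lo e, hi e} \<union> zero_params e"

definition local_coeff :: "'e \<Rightarrow> real \<Rightarrow> real \<Rightarrow> real" where
  "local_coeff e p = (if p = lo e then g (Vert (src e))
     else if p = hi e then g (Vert (tgt e)) else g (EPt e p))"

definition local_radius :: "'e \<Rightarrow> real \<Rightarrow> real" where
  "local_radius e p = (if p = lo e then r (Vert (src e))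
     else if p = hi e then r (Vert (tgt e)) else r (EPt e p))"

lemma finite_special_params: "e \<in> E \<Longrightarrow> finite (special_params e)"
  using finite_zero_params by (simp add: special_params_def)

lemma local_form_at_vertex:
  assumes "v \<in> V"
  shows "r (Vert v) > 0 \<and> (\<forall>s. \<bar>s - fv v\<bar> < r (Vert v) \<longrightarrow> smooth_near (g (Vert v)) s) \<and>
    (\<forall>e\<in>E. incident src tgt v e \<longrightarrow> (\<forall>t. lo e < t \<and> t < hi e \<and> \<bar>t - fv v\<bar> < r (Vert v) \<longrightarrow>
        sgn (g (Vert v) t) = - sgn (c e t)))"
proof -
  have "local_form_ok E src tgt fv c (Vert v) (r (Vert v)) (g (Vert v))"
    using local_forms assms Vert_exceptional_iff by blast
  then show ?thesis by (simp add: local_form_ok_def fval_def)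
qed

lemma local_form_at_zero_param:
  assumes "e \<in> E" "z \<in> zero_params e"
  shows "r (EPt e z) > 0 \<and> (\<forall>s. \<bar>s - z\<bar> < r (EPt e z) \<longrightarrow> smooth_near (g (EPt e z)) s) \<and>
    (\<forall>t. lo e < t \<and> t < hi e \<and> \<bar>t - z\<bar> < r (EPt e z) \<and> t \<noteq> z \<longrightarrow>
        sgn (g (EPt e z) t) = - sgn (c e t))"
proof -
  have "local_form_ok E src tgt fv c (EPt e z) (r (EPt e z)) (g (EPt e z))"
    using local_forms assms EPt_exceptional_iff by blast
  then show ?thesis by (simp add: local_form_ok_def fval_def)
qed

lemma local_coeff_props:
  assumes e: "e \<in> E" and p: "p \<in> special_params e"
  shows local_radius_pos: "local_radius e p > 0"
    and smooth_near_local_coeff: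
      "\<And>s. \<bar>s - p\<bar> < local_radius e p \<Longrightarrow> smooth_near (local_coeff e p) s"
    and sgn_local_coeff:
      "\<And>t. lo e < t \<Longrightarrow> t < hi e \<Longrightarrow> t \<noteq> p \<Longrightarrow> \<bar>t - p\<bar> < local_radius e p \<Longrightarrow>
        sgn (local_coeff e p t) = - sgn (c e t)"
proof -
  have ends: "src e \<in> V" "tgt e \<in> V" "lo e < hi e" using edge_ends[OF e] by auto
  have inc: "incident src tgt (src e) e" "incident src tgt (tgt e) e" by (auto simp: incident_def)
  consider "p = lo e" | "p \<noteq> lo e" "p = hi e" | "p \<noteq> lo e" "p \<noteq> hi e" "p \<in> zero_params e"
    using p by (auto simp: special_params_def)
  then have "local_radius e p > 0 \<and>
      (\<forall>s. \<bar>s - p\<bar> < local_radius e p \<longrightarrow> smooth_near (local_coeff e p) s) \<and>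
      (\<forall>t. lo e < t \<and> t < hi e \<and> t \<noteq> p \<and> \<bar>t - p\<bar> < local_radius e p \<longrightarrow>
        sgn (local_coeff e p t) = - sgn (c e t))"
  proof cases
    case 1
    then show ?thesis
      using local_form_at_vertex[OF ends(1)] e inc by (auto simp: local_coeff_def local_radius_def)
  next
    case 2
    then show ?thesis
      using local_form_at_vertex[OF ends(2)] e inc by (auto simp: local_coeff_def local_radius_def)
  next
    case 3
    then show ?thesis
      using local_form_at_zero_param[OF e 3(3)] by (simp add: local_coeff_def local_radius_def)
  qed
  then show "local_radius e p > 0"
    "\<And>s. \<bar>s - p\<bar> < local_radius e p \<Longrightarrow> smooth_near (local_coeff e p) s"
    "\<And>t. lo e < t \<Longrightarrow> t < hi e \<Longrightarrow> t \<noteq> p \<Longrightarrow> \<bar>t - p\<bar> < local_radius e p \<Longrightarrow>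
        sgn (local_coeff e p t) = - sgn (c e t)"
    by auto
qed

definition sign_ball :: "'e \<Rightarrow> real \<Rightarrow> real \<times> real" where
  "sign_ball e s = (SOME (q, h). h > 0 \<and> lo e < q - h \<and> q + h < hi e \<and>
      (\<forall>t. \<bar>t - q\<bar> \<le> h \<longrightarrow> s * (t * c e t) > 0))"

lemma sign_ball:
  assumes e: "e \<in> E" and "sign_region e s"
  shows "snd (sign_ball e s) > 0 \<and> lo e < fst (sign_ball e s) - snd (sign_ball e s) \<and>
      fst (sign_ball e s) + snd (sign_ball e s) < hi e \<and>
      (\<forall>t. \<bar>t - fst (sign_ball e s)\<bar> \<le> snd (sign_ball e s) \<longrightarrow> s * (t * c e t) > 0)"
proof -
  obtain t0 where t0: "lo e < t0" "t0 < hi e" "s * (t0 * c e t0) > 0"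
    using assms(2) by (auto simp: sign_region_def)
  have "isCont (\<lambda>t. s * (t * c e t)) t0"
    using isCont_f_circulation[OF e t0(1,2)] by (rule continuous_mult_left)
  then obtain \<epsilon> where \<epsilon>: "\<epsilon> > 0" "\<And>y. \<bar>y - t0\<bar> < \<epsilon> \<Longrightarrow> s * (y * c e y) > 0"
    by (rule isCont_pos_near) (use t0 in auto)
  define h where "h = min \<epsilon> (min (t0 - lo e) (hi e - t0)) / 2"
  have "h > 0" "h < \<epsilon>" "h < t0 - lo e" "h < hi e - t0" using t0 \<epsilon> by (auto simp: h_def)
  then have "h > 0 \<and> lo e < t0 - h \<and> t0 + h < hi e \<and> (\<forall>t. \<bar>t - t0\<bar> \<le> h \<longrightarrow> s * (t * c e t) > 0)"
    using \<epsilon> by auto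
  then have "case (t0, h) of (q, h) \<Rightarrow> h > 0 \<and> lo e < q - h \<and> q + h < hi e \<and>
      (\<forall>t. \<bar>t - q\<bar> \<le> h \<longrightarrow> s * (t * c e t) > 0)" by simp
  then show ?thesis unfolding sign_ball_def by (rule someI2) (auto split: prod.splits)
qed

lemma sign_ball_avoids_special_params:
  assumes e: "e \<in> E" "sign_region e s" and p: "p \<in> special_params e"
  shows "snd (sign_ball e s) < \<bar>fst (sign_ball e s) - p\<bar>"
proof (rule ccontr)
  assume "\<not> ?thesis"
  then have "\<bar>p - fst (sign_ball e s)\<bar> \<le> snd (sign_ball e s)" by linarith
  then have "s * (p * c e p) > 0" "p \<noteq> lo e" "p \<noteq> hi e" using sign_ball[OF e] by auto
  then show False using p by (auto simp: special_params_def zero_params_def)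
qed

definition sign_bump :: "'e \<Rightarrow> real \<Rightarrow> real \<Rightarrow> real" where
  "sign_bump e s = (if sign_region e s then bump (fst (sign_ball e s)) (snd (sign_ball e s))
     else (\<lambda>t. 0))"

lemma sign_bump_nonneg: "sign_bump e s t \<ge> 0"
  by (simp add: sign_bump_def bump_nonneg)

lemma smooth_near_sign_bump: "smooth_near (sign_bump e s) x"
  by (simp add: sign_bump_def smooth_near_bump smooth_near_const)

definition admissible_width :: "'e \<Rightarrow> real \<Rightarrow> bool" where
  "admissible_width e d \<longleftrightarrow>
     (\<forall>p\<in>special_params e. \<forall>q\<in>special_params e. p \<noteq> q \<longrightarrow> 4 * d < \<bar>p - q\<bar>) \<and>
     (\<forall>p\<in>special_params e. 2 * d < local_radius e p) \<and>
     (\<forall>p\<in>special_params e. \<forall>s\<in>{1, -1}. sign_region e s \<longrightarrow>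
        snd (sign_ball e s) + 2 * d < \<bar>fst (sign_ball e s) - p\<bar>)"

lemma eventually_mult_less_at_right_0:
  "a > 0 \<Longrightarrow> k > 0 \<Longrightarrow> eventually (\<lambda>d. k * d < a) (at_right (0::real))"
  unfolding eventually_at_right_field
  by (intro exI[of _ "a / k"]) (auto simp: pos_less_divide_eq mult.commute)

lemma eventually_admissible_width:
  assumes e: "e \<in> E"
  shows "eventually (admissible_width e) (at_right 0)"
proof -
  note fin = finite_special_params[OF e]
  have "eventually (\<lambda>d. p \<noteq> q \<longrightarrow> 4 * d < \<bar>p - q\<bar>) (at_right 0)" for p q :: real
    by (cases "p = q") (auto intro: eventually_mult_less_at_right_0)
  moreover have "eventually (\<lambda>d. 2 * d < local_radius e p) (at_right 0)"
    if "p \<in> special_params e" for p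
    using local_radius_pos[OF e that] by (intro eventually_mult_less_at_right_0) auto
  moreover have "eventually (\<lambda>d. sign_region e s \<longrightarrow>
      snd (sign_ball e s) + 2 * d < \<bar>fst (sign_ball e s) - p\<bar>) (at_right 0)"
    if "p \<in> special_params e" for p s
  proof (cases "sign_region e s")
    case True
    then show ?thesis
      using sign_ball_avoids_special_params[OF e True that]
        eventually_mult_less_at_right_0[of "\<bar>fst (sign_ball e s) - p\<bar> - snd (sign_ball e s)" 2]
      by (auto elim: eventually_mono)
  qed simp
  ultimately show ?thesis
    unfolding admissible_width_def
    by (intro eventually_conj eventually_ball_finite ballI fin) auto
qed

definition width :: real where
  "width = (SOME d. d > 0 \<and> (\<forall>e\<in>E. admissible_width e d))"

lemma width: "width > 0" "e \<in> E \<Longrightarrow> admissible_width e width"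
proof -
  have "eventually (\<lambda>d. d > 0 \<and> (\<forall>e\<in>E. admissible_width e d)) (at_right 0)"
    using eventually_admissible_width finite_edges
    by (intro eventually_conj eventually_ball_finite) (auto simp: eventually_at_right_less)
  then have "\<exists>d. d > 0 \<and> (\<forall>e\<in>E. admissible_width e d)"
    using eventually_happens' trivial_limit_at_right_real by blast
  then have "width > 0 \<and> (\<forall>e\<in>E. admissible_width e width)"
    unfolding width_def by (rule someI_ex)
  then show "width > 0" "e \<in> E \<Longrightarrow> admissible_width e width" by auto
qed

lemma width_separates:
  "e \<in> E \<Longrightarrow> p \<in> special_params e \<Longrightarrow> q \<in> special_params e \<Longrightarrow> p \<noteq> q \<Longrightarrow> 4 * width < \<bar>p - q\<bar>"
  using width(2) by (auto simp: admissible_width_def)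

lemma width_lt_local_radius:
  "e \<in> E \<Longrightarrow> p \<in> special_params e \<Longrightarrow> 2 * width < local_radius e p"
  using width(2) by (auto simp: admissible_width_def)

lemma width_clear_of_sign_ball:
  "e \<in> E \<Longrightarrow> p \<in> special_params e \<Longrightarrow> s \<in> {1, -1} \<Longrightarrow> sign_region e s \<Longrightarrow>
    snd (sign_ball e s) + 2 * width < \<bar>fst (sign_ball e s) - p\<bar>"
  using width(2) by (auto simp: admissible_width_def)

text \<open>On edge \<open>e\<close> the form is \<open>\<beta> = glued_coeff e l m \<cdot> df\<close>; the bump coefficients
  \<open>l, m \<ge> 0\<close> adjust \<open>\<integral>\<^sub>e f \<beta>\<close> without creating zeros.\<close>

definition cutoff_sum :: "'e \<Rightarrow> real \<Rightarrow> real" where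
  "cutoff_sum e t = (\<Sum>p\<in>special_params e. plateau width p t)"

definition glued_coeff :: "'e \<Rightarrow> real \<Rightarrow> real \<Rightarrow> real \<Rightarrow> real" where
  "glued_coeff e l m t =
     (\<Sum>p\<in>special_params e. plateau width p t * local_coeff e p t) +
     (1 - cutoff_sum e t + l * sign_bump e 1 t + m * sign_bump e (-1) t) * (- c e t)"

lemma plateau_other_eq_0:
  assumes "e \<in> E" "p \<in> special_params e" "q \<in> special_params e" "q \<noteq> p" "\<bar>t - p\<bar> < 2 * width"
  shows "plateau width q t = 0"
  using width_separates[OF assms(1,3,2,4)] assms(5) by (intro plateau_eq_0) linarith

lemma plateau_nonzero_imp_near: "plateau width p t \<noteq> 0 \<Longrightarrow> \<bar>t - p\<bar> < 2 * width"
  using plateau_eq_0[of width t p] by linarith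

lemma sign_bump_eq_0_near_special:
  assumes "e \<in> E" "p \<in> special_params e" "\<bar>t - p\<bar> \<le> width" "s \<in> {1, -1}"
  shows "sign_bump e s t = 0"
proof (cases "sign_region e s")
  case True
  have "snd (sign_ball e s) \<le> \<bar>t - fst (sign_ball e s)\<bar>"
    using width_clear_of_sign_ball[OF assms(1,2,4) True] assms(3) width(1) by linarith
  then show ?thesis using True by (simp add: sign_bump_def bump_eq_0)
qed (simp add: sign_bump_def)

lemma sum_plateau_single:
  assumes "e \<in> E" "p \<in> special_params e" "\<bar>t - p\<bar> < 2 * width"
  shows "(\<Sum>q\<in>special_params e. plateau width q t * H q) = plateau width p t * H p"
  using plateau_other_eq_0[OF assms(1,2) _ _ assms(3)]
  by (simp add: sum.remove[OF finite_special_params[OF assms(1)] assms(2)] sum.neutral)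

lemma cutoff_sum_single:
  assumes "e \<in> E" "p \<in> special_params e" "\<bar>t - p\<bar> < 2 * width"
  shows "cutoff_sum e t = plateau width p t"
  using sum_plateau_single[OF assms, of "\<lambda>q. 1"] by (simp add: cutoff_sum_def)

lemma glued_coeff_eq_local:
  assumes "e \<in> E" "p \<in> special_params e" "\<bar>t - p\<bar> \<le> width"
  shows "glued_coeff e l m t = local_coeff e p t"
proof -
  have near: "\<bar>t - p\<bar> < 2 * width" using assms(3) width(1) by linarith
  show ?thesis
    unfolding glued_coeff_def sum_plateau_single[OF assms(1,2) near]
      cutoff_sum_single[OF assms(1,2) near] plateau_eq_1[OF width(1) assms(3)]
    using sign_bump_eq_0_near_special[OF assms] by simp
qed

text \<open>Where a plateau is positive, the local form and \<open>-c\<close> are combined with nonnegative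
  weights and both have the sign of \<open>-c\<close>; elsewhere only \<open>-c\<close> contributes.\<close>

lemma glued_coeff_nonzero:
  assumes e: "e \<in> E" and t: "lo e < t" "t < hi e" "t \<notin> zero_params e"
    and lm: "l \<ge> 0" "m \<ge> 0"
  shows "glued_coeff e l m t \<noteq> 0"
proof -
  have c: "c e t \<noteq> 0" and "t \<notin> special_params e" using t by (auto simp: zero_params_def special_params_def)
  have bumps: "l * sign_bump e 1 t + m * sign_bump e (-1) t \<ge> 0"
    using lm sign_bump_nonneg by simp
  show ?thesis
  proof (cases "\<exists>p\<in>special_params e. plateau width p t \<noteq> 0")
    case True
    then obtain p where p: "p \<in> special_params e" "plateau width p t \<noteq> 0" by blast
    have near: "\<bar>t - p\<bar> < 2 * width" using plateau_nonzero_imp_near[OF p(2)] .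
    have pl: "0 < plateau width p t" "plateau width p t \<le> 1"
      using plateau_nonneg[OF width(1)] plateau_le_1[OF width(1)] p(2) by (auto simp: order_le_less)
    have "sgn (local_coeff e p t) = - sgn (c e t)"
      using sgn_local_coeff[OF e p(1) t(1,2)] \<open>t \<notin> special_params e\<close> p(1) near
        width_lt_local_radius[OF e p(1)] by auto
    then have "sgn (plateau width p t * local_coeff e p t) = sgn (- c e t)"
      using pl by (simp add: sgn_mult)
    moreover have "sgn ((1 - plateau width p t + l * sign_bump e 1 t + m * sign_bump e (-1) t) * - c e t)
        \<in> {0, sgn (- c e t)}"
      using pl bumps
      by (cases "1 - plateau width p t + l * sign_bump e 1 t + m * sign_bump e (-1) t = 0")
        (auto simp: sgn_mult)
    moreover have "glued_coeff e l m t = plateau width p t * local_coeff e p t +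
        (1 - plateau width p t + l * sign_bump e 1 t + m * sign_bump e (-1) t) * - c e t"
      unfolding glued_coeff_def sum_plateau_single[OF e p(1) near] cutoff_sum_single[OF e p(1) near] ..
    ultimately show ?thesis using c by (auto simp: sgn_if split: if_splits)
  next
    case False
    then have "glued_coeff e l m t = (1 + l * sign_bump e 1 t + m * sign_bump e (-1) t) * - c e t"
      by (simp add: glued_coeff_def cutoff_sum_def)
    then show ?thesis using bumps c by simp
  qed
qed

lemma smooth_near_glued_coeff:
  assumes e: "e \<in> E" and t: "lo e < t" "t < hi e"
  shows "smooth_near (glued_coeff e l m) t"
proof -
  have "smooth_near (\<lambda>y. \<Sum>p\<in>special_params e. plateau width p y * local_coeff e p y) t"
    by (rule smooth_near_sum[OF finite_special_params[OF e]], rule smooth_near_plateau_mult[OF width(1)])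
      (auto intro: width_lt_local_radius[OF e] smooth_near_local_coeff[OF e])
  moreover have "smooth_near (cutoff_sum e) t"
    unfolding cutoff_sum_def
    by (rule smooth_near_sum[OF finite_special_params[OF e]]) (rule smooth_near_plateau[OF width(1)])
  ultimately show ?thesis
    unfolding glued_coeff_def[abs_def]
    by (intro smooth_near_add smooth_near_mult smooth_near_diff smooth_near_const smooth_near_minus
        smooth_near_sign_bump smooth_near_circulation[OF e t])
qed

lemma continuous_on_glued_coeff:
  assumes e: "e \<in> E"
  shows "continuous_on {lo e..hi e} (glued_coeff e l m)"
proof -
  have "lo e < hi e" using edge_ends[OF e] by simp
  have "continuous (at x within {lo e..hi e}) (glued_coeff e l m)"
    if x: "x \<in> {lo e..hi e}" for x
  proof (cases "x = lo e \<or> x = hi e")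
    case True
    then have p: "x \<in> special_params e" by (auto simp: special_params_def)
    have "isCont (local_coeff e x) x"
      using smooth_near_local_coeff[OF e p, of x] local_radius_pos[OF e p] smooth_near_imp_isCont
      by auto
    then have "continuous (at x within {lo e..hi e}) (local_coeff e x)"
      by (rule continuous_at_imp_continuous_within)
    then show ?thesis
      by (rule continuous_transform_within[OF _ width(1) x])
        (use glued_coeff_eq_local[OF e p] in \<open>auto simp: dist_real_def\<close>)
  next
    case False
    then have "lo e < x" "x < hi e" using x by auto
    then show ?thesis
      using smooth_near_imp_isCont[OF smooth_near_glued_coeff[OF e]] continuous_at_imp_continuous_within
      by blast
  qed
  then show ?thesis by (simp add: continuous_on_eq_continuous_within)
qed

lemma glued_coeff_linear:
  "glued_coeff e l m t = glued_coeff e 0 0 t + l * (sign_bump e 1 t * - c e t) + m * (sign_bump e (-1) t * - c e t)"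
  by (simp add: glued_coeff_def algebra_simps)

section \<open>Integrals along the edges\<close>

definition bump_integral :: "'e \<Rightarrow> real \<Rightarrow> real" where
  "bump_integral e s = integral {lo e..hi e} (\<lambda>t. t * (sign_bump e s t * - c e t))"

definition base_integral :: "'e \<Rightarrow> real" where
  "base_integral e = integral {lo e..hi e} (\<lambda>t. t * glued_coeff e 0 0 t)"

lemma continuous_on_bump_term:
  assumes e: "e \<in> E" and s: "s \<in> {1, -1}"
  shows "continuous_on {lo e..hi e} (\<lambda>t. t * (sign_bump e s t * - c e t))"
proof -
  define l m :: real where "l = (if s = 1 then 1 else 0)" and "m = 1 - l"
  have "continuous_on {lo e..hi e} (\<lambda>t. t * (glued_coeff e l m t - glued_coeff e 0 0 t))"
    by (intro continuous_intros continuous_on_glued_coeff[OF e])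
  moreover have "glued_coeff e l m t - glued_coeff e 0 0 t = sign_bump e s t * - c e t" for t
    using glued_coeff_linear[of e l m t] s by (auto simp: l_def m_def)
  ultimately show ?thesis by simp
qed

lemma integral_glued_coeff:
  assumes e: "e \<in> E"
  shows "integral {lo e..hi e} (\<lambda>t. t * glued_coeff e l m t) =
    base_integral e + l * bump_integral e 1 + m * bump_integral e (-1)"
proof -
  let ?b = "\<lambda>s t. t * (sign_bump e s t * - c e t)"
  have int0: "(\<lambda>t. t * glued_coeff e 0 0 t) integrable_on {lo e..hi e}"
    by (intro integrable_continuous_real continuous_intros continuous_on_glued_coeff[OF e])
  have int: "(\<lambda>t. k * ?b s t) integrable_on {lo e..hi e}" if "s \<in> {1, -1}" for k s
    by (intro integrable_continuous_real continuous_on_mult_left continuous_on_bump_term[OF e that])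
  have "(\<lambda>t. t * glued_coeff e l m t) =
      (\<lambda>t. (t * glued_coeff e 0 0 t + l * ?b 1 t) + m * ?b (-1) t)"
    by (rule ext, subst glued_coeff_linear) (simp only: distrib_left mult.left_commute)
  then have "integral {lo e..hi e} (\<lambda>t. t * glued_coeff e l m t) =
      integral {lo e..hi e} (\<lambda>t. t * glued_coeff e 0 0 t + l * ?b 1 t) +
      integral {lo e..hi e} (\<lambda>t. m * ?b (-1) t)"
    by (simp only:) (intro integral_add integrable_add int0 int, auto)
  also have "\<dots> = base_integral e + l * bump_integral e 1 + m * bump_integral e (-1)"
    by (subst integral_add[OF int0 int]) (simp_all add: base_integral_def bump_integral_def)
  finally show ?thesis .
qed

lemma sign_bump_integral:
  assumes e: "e \<in> E" and s: "s \<in> {1, -1}" and region: "sign_region e s"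
  shows "s * bump_integral e s < 0"
proof -
  note ball = sign_ball[OF e region]
  let ?q = "fst (sign_ball e s)" and ?h = "snd (sign_ball e s)"
  let ?f = "\<lambda>t. s * (t * (sign_bump e s t * - c e t))"
  have f_eq: "?f t = - (bump ?q ?h t * (s * (t * c e t)))" for t
    using region by (simp add: sign_bump_def algebra_simps)
  have "integral {lo e..hi e} ?f < 0"
  proof (rule integral_neg_if_neg_at[of _ _ _ ?q])
    show "continuous_on {lo e..hi e} ?f"
      by (intro continuous_on_mult_left continuous_on_bump_term[OF e s])
    show "lo e < hi e" using edge_ends[OF e] by simp
    show "?q \<in> {lo e..hi e}" using ball by auto
    show "?f ?q < 0" unfolding f_eq using ball bump_pos[of ?q ?q ?h] by simp
    show "?f t \<le> 0" for t
    proof (cases "\<bar>t - ?q\<bar> < ?h")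
      case True
      then have "s * (t * c e t) > 0" using ball by auto
      then show ?thesis unfolding f_eq using bump_nonneg[of ?q ?h t] by simp
    next
      case False
      then show ?thesis unfolding f_eq by (simp add: bump_eq_0)
    qed
  qed
  then show ?thesis by (simp add: bump_integral_def)
qed

definition potential_scale :: real where
  "potential_scale = 1 + (\<Sum>e\<in>E. \<bar>base_integral e\<bar> / \<bar>potential_step e\<bar>)"

lemma base_integral_lt_potential_scale:
  assumes "e \<in> E" "potential_step e \<noteq> 0"
  shows "\<bar>base_integral e\<bar> < potential_scale * \<bar>potential_step e\<bar>"
proof -
  have "\<bar>base_integral e\<bar> / \<bar>potential_step e\<bar> \<le> (\<Sum>e\<in>E. \<bar>base_integral e\<bar> / \<bar>potential_step e\<bar>)"
    using assms(1) finite_edges by (intro member_le_sum) auto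
  then have "(1 + \<bar>base_integral e\<bar> / \<bar>potential_step e\<bar>) * \<bar>potential_step e\<bar> \<le> potential_scale * \<bar>potential_step e\<bar>"
    by (intro mult_right_mono) (auto simp: potential_scale_def)
  moreover have "(1 + \<bar>base_integral e\<bar> / \<bar>potential_step e\<bar>) * \<bar>potential_step e\<bar> =
      \<bar>potential_step e\<bar> + \<bar>base_integral e\<bar>"
    using assms(2) by (simp add: field_simps)
  moreover have "\<bar>potential_step e\<bar> > 0" using assms(2) by simp
  ultimately show ?thesis by linarith
qed

text \<open>A correction of sign \<open>-s\<close> needs a sign region for \<open>s\<close>. Without one,
  \<open>s \<cdot> potential_step e > 0\<close>, and since \<open>potential_scale\<close> dominates \<open>base_integral\<close>
  the correction has sign \<open>s\<close>.\<close>

lemma exists_bump_coeffs: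
  assumes e: "e \<in> E"
  shows "\<exists>l m. 0 \<le> l \<and> 0 \<le> m \<and>
    integral {lo e..hi e} (\<lambda>t. t * glued_coeff e l m t) = potential_scale * potential_step e"
proof -
  define D where "D = potential_scale * potential_step e - base_integral e"
  have "sign_region e 1" if "D < 0"
  proof (rule ccontr)
    assume "\<not> sign_region e 1"
    then have "potential_step e > 0"
      using sign_potential_step_without_sign_region[OF e, of 1] by simp
    then show False
      using base_integral_lt_potential_scale[OF e] \<open>D < 0\<close> by (simp add: D_def)
  qed
  moreover have "sign_region e (-1)" if "D > 0"
  proof (rule ccontr)
    assume "\<not> sign_region e (-1)"
    then have "potential_step e < 0"
      using sign_potential_step_without_sign_region[OF e, of "-1"] by simp
    then show False
      using base_integral_lt_potential_scale[OF e] \<open>D > 0\<close> by (simp add: D_def)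
  qed
  ultimately consider "D \<le> 0" "sign_region e 1" | "D \<ge> 0" "sign_region e (-1)"
    using sign_region_exists[OF e] by fastforce
  then have "\<exists>l m. 0 \<le> l \<and> 0 \<le> m \<and> l * bump_integral e 1 + m * bump_integral e (-1) = D"
  proof cases
    case 1
    then have "bump_integral e 1 < 0" using sign_bump_integral[OF e, of 1] by simp
    then show ?thesis
      using 1 by (intro exI[of _ "D / bump_integral e 1"] exI[of _ 0]) (auto simp: divide_nonpos_neg)
  next
    case 2
    then have "bump_integral e (-1) > 0" using sign_bump_integral[OF e, of "-1"] by simp
    then show ?thesis
      using 2 by (intro exI[of _ 0] exI[of _ "D / bump_integral e (-1)"]) auto
  qed
  then obtain l m where "0 \<le> l" "0 \<le> m" "l * bump_integral e 1 + m * bump_integral e (-1) = D"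
    by blast
  then show ?thesis by (intro exI[of _ l] exI[of _ m]) (auto simp: integral_glued_coeff[OF e] D_def)
qed

lemma glued_coeff_eq_local_at_vertex:
  assumes "e \<in> E" "incident src tgt v e" "\<bar>t - fv v\<bar> \<le> width"
  shows "glued_coeff e l m t = g (Vert v) t"
  using assms glued_coeff_eq_local[OF assms(1), of "lo e" t] glued_coeff_eq_local[OF assms(1), of "hi e" t]
    edge_ends[OF assms(1)]
  by (auto simp: incident_def special_params_def local_coeff_def)

lemma one_form_glued: "one_form V E src tgt fv (\<lambda>e. glued_coeff e (l e) (m e))"
  unfolding one_form_def
proof (intro conjI ballI allI impI)
  fix e t assume "e \<in> E" "lo e < t \<and> t < hi e"
  then show "smooth_near (glued_coeff e (l e) (m e)) t" using smooth_near_glued_coeff by auto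
next
  fix v assume "v \<in> V"
  then show "\<exists>h \<delta>. 0 < \<delta> \<and> smooth_near h (fv v) \<and> (\<forall>e\<in>E. incident src tgt v e \<longrightarrow>
      (\<forall>t. lo e \<le> t \<and> t \<le> hi e \<and> \<bar>t - fv v\<bar> < \<delta> \<longrightarrow> glued_coeff e (l e) (m e) t = h t))"
    using local_form_at_vertex width(1) glued_coeff_eq_local_at_vertex
    by (intro exI[of _ "g (Vert v)"] exI[of _ width]) auto
qed

lemma coincides_near_glued:
  assumes "p \<in> exceptional_points"
  shows "coincides_near E src tgt fv (\<lambda>e. glued_coeff e (l e) (m e)) p (r p) (g p)"
proof (cases p)
  case (Vert v)
  then have "r (Vert v) > 0" using assms Vert_exceptional_iff local_form_at_vertex by auto
  then show ?thesis
    unfolding coincides_near_def Vert using width(1) glued_coeff_eq_local_at_vertex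
    by (intro exI[of _ "min width (r (Vert v))"]) auto
next
  case (EPt e z)
  then have e: "e \<in> E" "z \<in> zero_params e" using assms EPt_exceptional_iff by auto
  then have "z \<in> special_params e" "z \<noteq> lo e" "z \<noteq> hi e"
    by (auto simp: special_params_def zero_params_def)
  then have "glued_coeff e (l e) (m e) t = g (EPt e z) t" if "\<bar>t - z\<bar> < width" for t
    using glued_coeff_eq_local[OF e(1)] that by (auto simp: local_coeff_def)
  then show ?thesis
    unfolding coincides_near_def EPt using width(1) local_form_at_zero_param[OF e]
    by (intro exI[of _ "min width (r (EPt e z))"]) auto
qed

end

theorem proposition4p19:
  fixes V :: "'v set" and E :: "'e set" and src tgt :: "'e \<Rightarrow> 'v"
    and fv :: "'v \<Rightarrow> real" and B :: "'v set"
    and dens c :: "'e \<Rightarrow> real \<Rightarrow> real"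
    and r :: "('v, 'e) gpt \<Rightarrow> real" and g :: "('v, 'e) gpt \<Rightarrow> real \<Rightarrow> real"
  assumes "reeb_graph V E src tgt fv B"
    and "log_smooth V E src tgt fv dens"
    and "circulation V E src tgt fv B dens c"
    and "balanced V E src tgt fv c"
    and "\<forall>p\<in>exceptional V E src tgt fv c. local_form_ok E src tgt fv c p (r p) (g p)"
  shows "\<exists>ge. one_form V E src tgt fv ge \<and>
           (\<forall>e\<in>E. \<forall>t. fv (src e) < t \<and> t < fv (tgt e) \<and>
              EPt e t \<notin> exceptional V E src tgt fv c \<longrightarrow> ge e t \<noteq> 0) \<and>
           (\<forall>p\<in>exceptional V E src tgt fv c. coincides_near E src tgt fv ge p (r p) (g p)) \<and>
           exact_form E src tgt fv (\<lambda>e t. t * ge e t)"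
proof -
  interpret reeb_form_setting V E src tgt fv B dens c r g
    using assms by unfold_locales
  obtain l m where lm: "\<And>e. e \<in> E \<Longrightarrow> 0 \<le> l e \<and> 0 \<le> m e \<and>
      integral {lo e..hi e} (\<lambda>t. t * glued_coeff e (l e) (m e) t) = potential_scale * potential_step e"
    using exists_bump_coeffs by metis
  let ?ge = "\<lambda>e. glued_coeff e (l e) (m e)"
  have "exact_form E src tgt fv (\<lambda>e t. t * ?ge e t)"
    by (rule exact_form_if_potential[where F = "\<lambda>v. potential_scale * potential v"])
      (simp add: lm potential_step_def right_diff_distrib)
  moreover have "?ge e t \<noteq> 0" if "e \<in> E" "lo e < t" "t < hi e" "EPt e t \<notin> exceptional_points" for e t
    using glued_coeff_nonzero that lm EPt_exceptional_iff by auto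
  ultimately show ?thesis
    using one_form_glued coincides_near_glued by blast
qed

end
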